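(* Let $X$ have a pdf $f$ satisfying Conditions (A) and (B) below, and fix the zero-wait sampler. For $\delta>0$ let $D_\delta=D(Q_{\mathrm{uni}}^\delta)$. Then the uniform quantizer is asymptotically optimal: $$\lim_{\delta\to0}\Big[\mathrm{AoI}(S_{\mathrm z},Q_{\mathrm{uni}}^\delta,F^* )-\inf_{Q:\,D(Q)\le D_\delta}\mathrm{AoI}(S_{\mathrm z},Q,F^* )\Big]=0.$$
   Context: Let $X$ be a real random variable with pdf $f$. Condition (A): $f$ is continuous and differentiable, and its support is a bounded interval $I$. Condition (B): $\int_I f\log_2^2 f\,dx$ and $-\int_I f\log_2 f\,dx$ exist and are finite. Quantizers. A quantizer $Q$ partitions $I$ into intervals $[a_{i-1},a_i]$ with representation points $c_i$. Write $p_i=P(X\in[a_{i-1},a_i])$. The mean-squared distortion is $D(Q)=\sum_i\int_{a_{i-1}}^{a_i}(x-c_i)^2f(x)\,dx$. The uniform quantizer $Q_{\mathrm{uni}}^\delta$ partitions $I$ into consecutive cells of length $\delta$, with midpoint representation points. Codes. A real-valued code assigns lengths $l_i\in\mathbb R^+$ to the cells, subject to $\sum_i2^{-l_i}\le1$. The random codeword length is $L=l_i$ when $X$ is in cell $i$. Objective. Under the zero-wait sampler $S_{\mathrm z}$, the AoI is $\mathrm{AoI}(S_{\mathrm z},Q,l)=\frac{E[L^2]}{2E[L]}+E[L]$. We write $\mathrm{AoI}(S_{\mathrm z},Q,F^* )=\inf_l \mathrm{AoI}(S_{\mathrm z},Q,l)$, the infimum over real-valued codes for $Q$. *)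

theory Defs
  imports "HOL-Analysis.Analysis"
begin

text \<open>A (scalar) quantizer of the interval [lo, hi] is represented by a triple (n, a, c):
  n cells, boundaries a 0 = lo < a 1 < ... < a n = hi, cell i (1 <= i <= n) is
  [a (i-1), a i] with representation point c i.\<close>

type_synonym quantizer = "nat \<times> (nat \<Rightarrow> real) \<times> (nat \<Rightarrow> real)"

definition is_quantizer :: "real \<Rightarrow> real \<Rightarrow> quantizer \<Rightarrow> bool" where
  "is_quantizer lo hi Q = (case Q of (n, a, c) \<Rightarrow>
     n \<ge> 1 \<and> a 0 = lo \<and> a n = hi \<and> (\<forall>i<n. a i < a (Suc i)))"

definition qcells :: "quantizer \<Rightarrow> nat" where
  "qcells Q = fst Q"

definition qbound :: "quantizer \<Rightarrow> nat \<Rightarrow> real" where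
  "qbound Q = fst (snd Q)"

definition qrep :: "quantizer \<Rightarrow> nat \<Rightarrow> real" where
  "qrep Q = snd (snd Q)"

definition cell_prob :: "(real \<Rightarrow> real) \<Rightarrow> quantizer \<Rightarrow> nat \<Rightarrow> real" where
  "cell_prob f Q i = integral {qbound Q (i - 1)..qbound Q i} f"

definition distortion :: "(real \<Rightarrow> real) \<Rightarrow> quantizer \<Rightarrow> real" where
  "distortion f Q = (\<Sum>i=1..qcells Q.
     integral {qbound Q (i - 1)..qbound Q i} (\<lambda>x. (x - qrep Q i)^2 * f x))"

definition uniform_quantizer :: "real \<Rightarrow> real \<Rightarrow> real \<Rightarrow> quantizer" where
  "uniform_quantizer lo hi \<delta> =
     (let n = nat \<lceil>(hi - lo) / \<delta>\<rceil>;
          a = (\<lambda>i. min (lo + real i * \<delta>) hi)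
      in (n, a, (\<lambda>i. (a (i - 1) + a i) / 2)))"

definition is_real_code :: "quantizer \<Rightarrow> (nat \<Rightarrow> real) \<Rightarrow> bool" where
  "is_real_code Q l = ((\<forall>i\<in>{1..qcells Q}. l i > 0) \<and>
                       (\<Sum>i=1..qcells Q. 2 powr (- l i)) \<le> 1)"

definition EL :: "(real \<Rightarrow> real) \<Rightarrow> quantizer \<Rightarrow> (nat \<Rightarrow> real) \<Rightarrow> real" where
  "EL f Q l = (\<Sum>i=1..qcells Q. cell_prob f Q i * l i)"

definition EL2 :: "(real \<Rightarrow> real) \<Rightarrow> quantizer \<Rightarrow> (nat \<Rightarrow> real) \<Rightarrow> real" where
  "EL2 f Q l = (\<Sum>i=1..qcells Q. cell_prob f Q i * (l i)^2)"

definition aoi_zw :: "(real \<Rightarrow> real) \<Rightarrow> quantizer \<Rightarrow> (nat \<Rightarrow> real) \<Rightarrow> real" where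
  "aoi_zw f Q l = EL2 f Q l / (2 * EL f Q l) + EL f Q l"

definition aoi_opt :: "(real \<Rightarrow> real) \<Rightarrow> quantizer \<Rightarrow> real" where
  "aoi_opt f Q = Inf {aoi_zw f Q l | l. is_real_code Q l}"

end

theory Submission
  imports Defs
begin

text \<open>For a quantizer with cell probabilities \<open>p\<^sub>i\<close>, entropy \<open>H\<close> and varentropy \<open>V\<close>
  (the variance of \<open>- ln p\<^sub>i\<close>), the optimal zero-wait AoI over real-valued codes lies between
  \<open>3/2 * H\<close> and \<open>3/2 * H + V / (2 * H)\<close> (in bits): Kraft's inequality gives \<open>E[L] \<ge> H\<close> and
  \<open>E[L\<^sup>2] \<ge> E[L]\<^sup>2\<close>, while the Shannon lengths \<open>- log\<^sub>2 p\<^sub>i\<close> attain the upper bound.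
  For the uniform quantizer with step \<open>\<delta>\<close> the varentropy stays bounded while the entropy grows
  like \<open>h(X) - ln \<delta>\<close>, so the AoI gap is at most \<open>3/2\<close> times the largest entropy deficit of a
  quantizer with no larger distortion, plus \<open>o(1)\<close>.

  That deficit is small: with \<open>\<eta>\<close> an \<open>\<epsilon>\<^sup>2\<close>-modulus of uniform continuity of \<open>f\<close>, a cell of any
  quantizer that is shorter than \<open>\<eta>\<close> and carries density at least \<open>\<epsilon>\<close> sees an almost constant
  \<open>f\<close>, so its entropy contribution is at least what its distortion forces, as for a uniform cell;
  on the other cells, Gibbs' inequality against a Cauchy density of matching second moment does the
  job up to an error of order \<open>\<epsilon>\<close>. Jensen's inequality over the cells then gives
  \<open>H(Q) \<ge> h(X) - ln (12 * D(Q)) / 2 - O(\<epsilon>)\<close>, while \<open>D\<^sub>\<delta> \<approx> \<delta>\<^sup>2 / 12\<close> and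
  \<open>H(Q\<^sub>u\<^sub>n\<^sub>i) \<approx> h(X) - ln \<delta>\<close>.\<close>

lemma mult_ln_ge_tangent:
  fixes t s :: real
  assumes "0 \<le> t" "0 < s"
  shows "t * ln s + t - s \<le> t * ln t"
proof (cases "t = 0")
  case False
  then have t: "0 < t" using assms by simp
  have "t * ln (s / t) \<le> t * (s / t - 1)"
    using ln_le_minus_one[of "s / t"] t assms by (intro mult_left_mono) auto
  then show ?thesis using t assms by (simp add: ln_div algebra_simps)
qed (use assms in simp)

lemma mult_ln_div_le:
  fixes p K :: real
  assumes "0 < p" "0 < K"
  shows "p * ln (K / p) \<le> K / exp 1"
  using mult_ln_ge_tangent[of p "K / exp 1"] assms by (simp add: ln_div algebra_simps)

lemma mult_ln_squared_le:
  fixes q M :: real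
  assumes q: "0 < q" "q \<le> M" and M: "1 \<le> M"
  shows "q * (ln q)^2 \<le> 4 + M^3"
proof (cases "q \<le> 1")
  case True
  define s where "s = sqrt q"
  have s: "0 < s" "q = s^2" using q by (simp_all add: s_def)
  have "- ln s \<le> 1 / s" using ln_le_minus_one[of "1 / s"] s by (simp add: ln_div)
  moreover have "ln q \<le> 0" using True q by simp
  moreover have "ln q = 2 * ln s" using s by (simp add: ln_realpow)
  ultimately have "(- ln q)^2 \<le> (2 / s)^2" by (intro power_mono) auto
  then have "(ln q)^2 \<le> (2 / s)^2" by simp
  then have "q * (ln q)^2 \<le> s^2 * (2 / s)^2" using s by (simp add: mult_left_mono)
  also have "\<dots> = 4" using s by (simp add: power_divide)
  moreover have "0 \<le> M^3" using M by simp
  ultimately show ?thesis by linarith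
next
  case False
  have "(ln q)^2 \<le> q^2" using ln_le_minus_one[of q] False by (intro power_mono) auto
  then have "q * (ln q)^2 \<le> q^3" using q by (simp add: mult_left_mono power3_eq_cube power2_eq_square)
  also have "\<dots> \<le> M^3" using q by (intro power_mono) auto
  finally show ?thesis by simp
qed

lemma sum_mult_ln_div_le_ln_sum:
  fixes p y :: "'a \<Rightarrow> real"
  assumes "finite A" "A \<noteq> {}" and p: "\<And>i. i \<in> A \<Longrightarrow> 0 < p i" "sum p A = 1"
    and y: "\<And>i. i \<in> A \<Longrightarrow> 0 < y i"
  shows "(\<Sum>i\<in>A. p i * ln (y i / p i)) \<le> ln (sum y A)"
proof -
  have "(\<Sum>i\<in>A. p i * ln (y i / p i)) \<le> ln (\<Sum>i\<in>A. p i *\<^sub>R (y i / p i))"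
    using assms by (intro concave_on_sum[OF _ _ ln_concave]) (auto simp: less_imp_le)
  also have "(\<Sum>i\<in>A. p i *\<^sub>R (y i / p i)) = sum y A"
    using p(1) by (intro sum.cong refl) (simp add: less_imp_neq[symmetric])
  finally show ?thesis .
qed

lemma continuous_on_mult_ln: "continuous_on {0..} (\<lambda>t::real. t * ln t)"
proof -
  have "continuous (at t within {0..}) (\<lambda>t::real. t * ln t)" if "t \<in> {0..}" for t
  proof (cases "t = 0")
    case True
    have "((\<lambda>t::real. t * ln t) \<longlongrightarrow> 0) (at_right 0)" by real_asymp
    then show ?thesis using True by (simp add: continuous_within at_within_Ici_at_right)
  next
    case False
    then have "isCont (\<lambda>t::real. t * ln t) t" using that by (auto intro!: continuous_intros)
    then show ?thesis by (rule continuous_at_imp_continuous_within)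
  qed
  then show ?thesis by (simp add: continuous_on_eq_continuous_within)
qed

lemma continuous_on_mult_ln_comp:
  assumes "continuous_on S f" "\<And>x. x \<in> S \<Longrightarrow> 0 \<le> (f x :: real)"
  shows "continuous_on S (\<lambda>x. f x * ln (f x))"
  using continuous_on_compose2[OF continuous_on_mult_ln assms(1)] assms(2) by auto

section \<open>Integral estimates on a single cell\<close>

lemma has_integral_shifted_square:
  fixes a b c :: real
  assumes "a \<le> b"
  shows "((\<lambda>x. (x - c)^2) has_integral ((b - c)^3 - (a - c)^3) / 3) {a..b}"
proof -
  have "((\<lambda>x. (x - c)^3 / 3) has_vector_derivative (x - c)^2) (at x within {a..b})" for x
    by (auto intro!: derivative_eq_intros simp: has_real_derivative_iff_has_vector_derivative[symmetric])
  from fundamental_theorem_of_calculus[OF assms this] show ?thesis by (simp add: diff_divide_distrib)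
qed

lemma shifted_cube_diff_ge:
  fixes a b c :: real
  assumes "a \<le> b"
  shows "(b - a)^3 / 12 \<le> ((b - c)^3 - (a - c)^3) / 3"
proof -
  have "4 * ((b - c)^3 - (a - c)^3) - (b - a)^3 = 3 * (b - a) * (a + b - 2 * c)^2"
    by (simp add: power3_eq_cube power2_eq_square algebra_simps)
  moreover have "0 \<le> 3 * (b - a) * (a + b - 2 * c)^2" using assms by simp
  ultimately show ?thesis by linarith
qed

definition cauchy_kernel :: "real \<Rightarrow> real \<Rightarrow> real \<Rightarrow> real" where
  "cauchy_kernel s c x = 1 / (s * (1 + ((x - c) / s)^2))"

lemma cauchy_kernel_pos: "0 < s \<Longrightarrow> 0 < cauchy_kernel s c x"
  by (simp add: cauchy_kernel_def add_pos_nonneg)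

lemma continuous_on_cauchy_kernel:
  assumes "0 < s"
  shows "continuous_on S (cauchy_kernel s c)"
proof -
  have "0 < s * (1 + ((x - c) / s)^2)" for x
    using assms by (simp add: add_pos_nonneg)
  then show ?thesis unfolding cauchy_kernel_def by (intro continuous_intros) (auto simp: less_le)
qed

lemma has_integral_cauchy_kernel:
  assumes "a \<le> b" "0 < s"
  shows "(cauchy_kernel s c has_integral (arctan ((b - c) / s) - arctan ((a - c) / s))) {a..b}"
proof -
  have "((\<lambda>x. arctan ((x - c) / s)) has_real_derivative cauchy_kernel s c x) (at x within {a..b})" for x
  proof -
    have "((\<lambda>x. (x - c) / s) has_real_derivative 1 / s) (at x within {a..b})"
      using assms by (auto intro!: derivative_eq_intros)
    from DERIV_chain2[where g = "\<lambda>x. (x - c) / s", OF DERIV_arctan this]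
    have "((\<lambda>x. arctan ((x - c) / s)) has_real_derivative inverse (1 + ((x - c) / s)^2) * (1 / s))
        (at x within {a..b})" .
    moreover have "inverse (1 + ((x - c) / s)^2) * (1 / s) = cauchy_kernel s c x"
      using assms by (simp add: cauchy_kernel_def field_simps add_pos_nonneg)
    ultimately show ?thesis by simp
  qed
  then show ?thesis
    by (intro fundamental_theorem_of_calculus assms) (simp add: has_real_derivative_iff_has_vector_derivative)
qed

lemma integral_cauchy_kernel_le:
  assumes "a \<le> b" "0 < s"
  shows "integral {a..b} (cauchy_kernel s c) \<le> pi"
  using integral_unique[OF has_integral_cauchy_kernel[OF assms, of c]]
    arctan_bounded[of "(b - c) / s"] arctan_bounded[of "(a - c) / s"] by linarith

lemma cell_integrable:
  fixes f :: "real \<Rightarrow> real"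
  assumes "continuous_on {a..b} f" "\<And>x. x \<in> {a..b} \<Longrightarrow> 0 \<le> f x"
  shows "f integrable_on {a..b}" "(\<lambda>x. (x - c)^2 * f x) integrable_on {a..b}"
    "(\<lambda>x. f x * ln (f x)) integrable_on {a..b}"
  using assms continuous_on_mult_ln_comp[OF assms]
  by (auto intro!: integrable_continuous_real continuous_intros)

lemma mass_ln_mean_le_integral:
  fixes f :: "real \<Rightarrow> real"
  assumes ab: "a < b" and cont: "continuous_on {a..b} f" and nonneg: "\<And>x. x \<in> {a..b} \<Longrightarrow> 0 \<le> f x"
  defines "p \<equiv> integral {a..b} f"
  assumes p: "0 < p"
  shows "p * ln (p / (b - a)) \<le> integral {a..b} (\<lambda>x. f x * ln (f x))"
proof -
  define s where "s = p / (b - a)"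
  have s: "0 < s" "s * (b - a) = p" using p ab by (simp_all add: s_def)
  have hf: "(f has_integral p) {a..b}"
    using cell_integrable(1)[OF cont nonneg] by (simp add: p_def has_integral_integral)
  have "((\<lambda>x. s) has_integral s * (b - a)) {a..b}"
    using has_integral_const_real[of s a b] ab by (simp add: mult.commute)
  then have "((\<lambda>x. f x * ln s + f x - s) has_integral (p * ln s + p - s * (b - a))) {a..b}"
    by (intro has_integral_diff has_integral_add has_integral_mult_left hf)
  then have "p * ln s + p - s * (b - a) \<le> integral {a..b} (\<lambda>x. f x * ln (f x))"
    using cell_integrable(3)[OF cont nonneg] mult_ln_ge_tangent[OF nonneg s(1)]
    by (intro has_integral_le[OF _ integrable_integral]) auto
  then show ?thesis using s by (simp add: s_def)
qed

lemma cell_entropy_ge_nearly_constant: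
  fixes f :: "real \<Rightarrow> real" and c :: real
  assumes ab: "a < b" and cont: "continuous_on {a..b} f" and m: "0 < m" "1 \<le> \<rho>"
    and bounds: "\<And>x. x \<in> {a..b} \<Longrightarrow> m \<le> f x \<and> f x \<le> \<rho> * m"
  defines "p \<equiv> integral {a..b} f" and "d \<equiv> integral {a..b} (\<lambda>x. (x - c)^2 * f x)"
    and "e \<equiv> integral {a..b} (\<lambda>x. f x * ln (f x))"
  shows "- e - p / 2 * ln (12 * \<rho> * d / p) \<le> - (p * ln p)"
proof -
  have nonneg: "\<And>x. x \<in> {a..b} \<Longrightarrow> 0 \<le> f x" using bounds m by (meson less_le_trans less_imp_le)
  note int = cell_integrable(1)[OF cont nonneg] cell_integrable(2)[OF cont nonneg, of c]
  have p_ge: "m * (b - a) \<le> p"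
    using integral_le[OF integrable_const_ivl int(1), of m] bounds ab by (simp add: p_def mult.commute)
  have p_le: "p \<le> \<rho> * m * (b - a)"
    using integral_le[OF int(1) integrable_const_ivl, of "\<rho> * m"] bounds ab by (simp add: p_def mult_ac)
  have p: "0 < p" using p_ge m ab by (smt (verit) mult_pos_pos)
  have "((b - a)^3 / 12) * m \<le> ((b - c)^3 - (a - c)^3) / 3 * m"
    using shifted_cube_diff_ge[of a b c] ab m by (intro mult_right_mono) auto
  also have "\<dots> \<le> d"
    unfolding d_def using has_integral_mult_left[OF has_integral_shifted_square, of a b c m] ab bounds
    by (intro has_integral_le[OF _ integrable_integral[OF int(2)]]) (auto intro!: mult_left_mono)
  finally have "m * (b - a) * (b - a)^2 \<le> 12 * d"
    by (simp add: power3_eq_cube power2_eq_square algebra_simps)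
  moreover have "p / \<rho> \<le> m * (b - a)" using p_le m by (simp add: field_simps mult.commute mult.left_commute)
  ultimately have "p / \<rho> * (b - a)^2 \<le> 12 * d"
    by (smt (verit) mult_right_mono zero_le_power2)
  then have len: "(b - a)^2 \<le> 12 * \<rho> * d / p" using p m by (simp add: field_simps)
  have pos: "0 < (b - a)^2" using ab by simp
  then have "ln ((b - a)^2) \<le> ln (12 * \<rho> * d / p)"
    using len by (subst ln_le_cancel_iff) (use pos in linarith)+
  then have "p * ln (b - a) \<le> p / 2 * ln (12 * \<rho> * d / p)"
    using p ab by (simp add: ln_realpow)
  moreover have "p * ln p - p * ln (b - a) \<le> e"
    using mass_ln_mean_le_integral[OF ab cont nonneg] p ab by (simp add: p_def e_def ln_div right_diff_distrib)
  ultimately show ?thesis by linarith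
qed

lemma mult_ln_ge_cauchy_bound:
  fixes t p \<sigma> x c :: real
  assumes t: "0 \<le> t" and p: "0 < p" and \<sigma>: "0 < \<sigma>"
  shows "t * (ln p - ln \<sigma>) - t * ((x - c) / \<sigma>)^2 + t - p * cauchy_kernel \<sigma> c x \<le> t * ln t"
proof -
  define u where "u = ((x - c) / \<sigma>)^2"
  have u: "0 \<le> u" by (simp add: u_def)
  have "p * cauchy_kernel \<sigma> c x = p / (\<sigma> * (1 + u))" by (simp add: cauchy_kernel_def u_def)
  then have "ln (p * cauchy_kernel \<sigma> c x) = ln p - ln \<sigma> - ln (1 + u)"
    using p \<sigma> u by (simp add: ln_mult ln_div add_pos_nonneg)
  then have "t * (ln p - ln \<sigma> - u) \<le> t * ln (p * cauchy_kernel \<sigma> c x)"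
    using ln_add_one_self_le_self[OF u] t by (intro mult_left_mono) auto
  moreover have "t * ln (p * cauchy_kernel \<sigma> c x) + t - p * cauchy_kernel \<sigma> c x \<le> t * ln t"
    by (rule mult_ln_ge_tangent[OF t mult_pos_pos[OF p cauchy_kernel_pos[OF \<sigma>]]])
  ultimately show ?thesis by (simp add: u_def algebra_simps)
qed

text \<open>Integrating the previous bound is Gibbs' inequality against \<open>p\<close> times the Cauchy density
  centred at \<open>c\<close> with scale \<open>sqrt (d / p)\<close>, whose mass on the cell is at most one.\<close>

lemma cell_entropy_ge:
  fixes f :: "real \<Rightarrow> real" and c :: real
  assumes ab: "a < b" and cont: "continuous_on {a..b} f" and nonneg: "\<And>x. x \<in> {a..b} \<Longrightarrow> 0 \<le> f x"
  defines "p \<equiv> integral {a..b} f" and "d \<equiv> integral {a..b} (\<lambda>x. (x - c)^2 * f x)"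
    and "e \<equiv> integral {a..b} (\<lambda>x. f x * ln (f x))"
  assumes p: "0 < p" and d: "0 < d"
  shows "- e - p / 2 * ln (d / p) - pi * p \<le> - (p * ln p)"
proof -
  define \<sigma> where "\<sigma> = sqrt (d / p)"
  define \<phi> where "\<phi> = cauchy_kernel \<sigma> c"
  have \<sigma>: "0 < \<sigma>" "\<sigma>^2 = d / p" "ln \<sigma> = ln (d / p) / 2"
    using p d by (simp_all add: \<sigma>_def ln_sqrt)
  note int = cell_integrable(1)[OF cont nonneg] cell_integrable(2)[OF cont nonneg, of c]
    cell_integrable(3)[OF cont nonneg]
  define G where "G x = f x * (ln p - ln \<sigma>) - (x - c)^2 * f x / \<sigma>^2 + f x - p * \<phi> x" for x
  have G_le: "G x \<le> f x * ln (f x)" if "x \<in> {a..b}" for x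
    using mult_ln_ge_cauchy_bound[OF nonneg[OF that] p \<sigma>(1), of x c]
    by (simp add: G_def \<phi>_def power_divide mult.commute)
  have "(\<phi> has_integral integral {a..b} \<phi>) {a..b}"
    unfolding \<phi>_def using continuous_on_cauchy_kernel[OF \<sigma>(1)]
    by (intro integrable_integral integrable_continuous_real)
  then have "(G has_integral (p * (ln p - ln \<sigma>) - d / \<sigma>^2 + p - p * integral {a..b} \<phi>)) {a..b}"
    unfolding G_def p_def d_def
    by (intro has_integral_diff has_integral_add has_integral_mult_left has_integral_mult_right
        has_integral_divide integrable_integral[OF int(1)] integrable_integral[OF int(2)])
  then have "p * (ln p - ln \<sigma>) - d / \<sigma>^2 + p - p * integral {a..b} \<phi> \<le> e"
    unfolding e_def using G_le by (intro has_integral_le[OF _ integrable_integral[OF int(3)]]) auto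
  moreover have "d / \<sigma>^2 = p" using \<sigma>(2) p d by simp
  ultimately have "p * ln p - p / 2 * ln (d / p) - p * integral {a..b} \<phi> \<le> e"
    using \<sigma>(3) by (simp add: algebra_simps)
  moreover have "p * integral {a..b} \<phi> \<le> pi * p"
    using mult_left_mono[OF integral_cauchy_kernel_le[OF _ \<sigma>(1)], of a b p c] ab p
    by (simp add: \<phi>_def mult.commute)
  ultimately show ?thesis by linarith
qed

text \<open>Pointwise, \<open>1 \<le> t + 1 / (1 + t)\<close> for \<open>t = ((x - c) / r)^2\<close>.\<close>

lemma cell_mass_le:
  fixes f :: "real \<Rightarrow> real"
  assumes ab: "a < b" and cont: "continuous_on {a..b} f" and nonneg: "\<And>x. x \<in> {a..b} \<Longrightarrow> 0 \<le> f x"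
    and bound: "\<And>x. x \<in> {a..b} \<Longrightarrow> f x \<le> M" and r: "0 < r"
  shows "integral {a..b} f \<le> integral {a..b} (\<lambda>x. (x - c)^2 * f x) / r^2 + pi * M * r"
proof -
  define \<phi> where "\<phi> = cauchy_kernel r c"
  have M: "0 \<le> M" using bound nonneg ab by (meson atLeastAtMost_iff less_imp_le order.trans order_refl)
  note int = cell_integrable(1)[OF cont nonneg] cell_integrable(2)[OF cont nonneg, of c]
  have int_\<phi>: "\<phi> integrable_on {a..b}"
    unfolding \<phi>_def by (rule integrable_continuous_real[OF continuous_on_cauchy_kernel[OF r]])
  have le: "f x \<le> (x - c)^2 * f x / r^2 + M * r * \<phi> x" if x: "x \<in> {a..b}" for x
  proof -
    define t where "t = ((x - c) / r)^2"
    have t: "0 \<le> t" by (simp add: t_def)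
    have "1 - t \<le> 1 / (1 + t)" using t by (simp add: le_divide_eq algebra_simps)
    then have "f x * (1 - t) \<le> f x * (1 / (1 + t))" using nonneg[OF x] by (rule mult_left_mono)
    moreover have "f x / (1 + t) \<le> M / (1 + t)" using bound[OF x] t by (simp add: divide_right_mono)
    moreover have "M / (1 + t) = M * r * \<phi> x" using r by (simp add: \<phi>_def cauchy_kernel_def t_def)
    moreover have "f x * t = (x - c)^2 * f x / r^2" by (simp add: t_def power_divide)
    ultimately show ?thesis by (simp add: algebra_simps)
  qed
  have "((\<lambda>x. (x - c)^2 * f x / r^2 + M * r * \<phi> x) has_integral
      integral {a..b} (\<lambda>x. (x - c)^2 * f x) / r^2 + M * r * integral {a..b} \<phi>) {a..b}"
    using int int_\<phi> by (intro has_integral_add has_integral_divide has_integral_mult_right integrable_integral)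
  then have "integral {a..b} f \<le> integral {a..b} (\<lambda>x. (x - c)^2 * f x) / r^2 + M * r * integral {a..b} \<phi>"
    using le int by (intro has_integral_le[OF integrable_integral]) auto
  also have "\<dots> \<le> integral {a..b} (\<lambda>x. (x - c)^2 * f x) / r^2 + M * r * pi"
    using integral_cauchy_kernel_le[OF _ r] ab M r by (simp add: \<phi>_def mult_left_mono)
  finally show ?thesis by (simp add: algebra_simps)
qed

lemma cell_entropy_le:
  fixes f :: "real \<Rightarrow> real"
  assumes cont: "continuous_on {a..b} f" and nonneg: "\<And>x. x \<in> {a..b} \<Longrightarrow> 0 \<le> f x"
    and bound: "\<And>x. x \<in> {a..b} \<Longrightarrow> f x \<le> M" and M: "0 < M"
  defines "p \<equiv> integral {a..b} f" and "e \<equiv> integral {a..b} (\<lambda>x. f x * ln (f x))"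
  assumes p: "0 < p"
  shows "- (p * ln p) \<le> - e + p * ln (M / p)"
proof -
  note int = cell_integrable(1,3)[OF cont nonneg]
  have "f x * ln (f x) \<le> f x * ln M" if x: "x \<in> {a..b}" for x
    using nonneg[OF x] bound[OF x] M by (cases "f x = 0") (auto intro!: mult_left_mono)
  then have "e \<le> integral {a..b} (\<lambda>x. f x * ln M)"
    unfolding e_def using int by (intro integral_le integrable_on_mult_left) auto
  then show ?thesis using p M by (simp add: p_def ln_div algebra_simps)
qed

lemma midpoint_moment_le:
  fixes f :: "real \<Rightarrow> real"
  assumes ab: "a \<le> b" and cont: "continuous_on {a..b} f" and nonneg: "\<And>x. x \<in> {a..b} \<Longrightarrow> 0 \<le> f x"
    and bound: "\<And>x. x \<in> {a..b} \<Longrightarrow> f x \<le> M"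
  shows "integral {a..b} (\<lambda>x. (x - (a + b) / 2)^2 * f x) \<le> M * (b - a)^3 / 12"
proof -
  have eq: "((b - (a + b) / 2)^3 - (a - (a + b) / 2)^3) / 3 * M = M * (b - a)^3 / 12"
    by (simp add: power3_eq_cube field_simps)
  have "((\<lambda>x. (x - (a + b) / 2)^2 * M) has_integral M * (b - a)^3 / 12) {a..b}"
    unfolding eq[symmetric] by (intro has_integral_mult_left has_integral_shifted_square ab)
  then show ?thesis
    using cell_integrable(2)[OF cont nonneg, of "(a + b) / 2"] bound
    by (intro has_integral_le[OF integrable_integral]) (auto intro!: mult_left_mono)
qed

lemma cell_entropy_le_bounded:
  fixes f :: "real \<Rightarrow> real"
  assumes cont: "continuous_on {a..b} f" and nonneg: "\<And>x. x \<in> {a..b} \<Longrightarrow> 0 \<le> f x"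
    and bound: "\<And>x. x \<in> {a..b} \<Longrightarrow> f x \<le> K" and K: "0 < K" and \<delta>: "0 < \<delta>"
  defines "p \<equiv> integral {a..b} f" and "e \<equiv> integral {a..b} (\<lambda>x. f x * ln (f x))"
  assumes p: "0 < p"
  shows "- (p * ln p) \<le> - e - p * ln \<delta> + K * \<delta> / exp 1"
proof -
  have "- (p * ln p) \<le> - e + p * ln (K / p)"
    unfolding p_def e_def using p by (intro cell_entropy_le[OF cont nonneg bound K]) (simp_all add: p_def)
  also have "p * ln (K / p) = - p * ln \<delta> + p * ln (K * \<delta> / p)"
    using K \<delta> p by (simp add: ln_div ln_mult algebra_simps)
  also have "p * ln (K * \<delta> / p) \<le> K * \<delta> / exp 1"
    using mult_ln_div_le[of p "K * \<delta>"] K \<delta> p by simp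
  finally show ?thesis by simp
qed

lemma cell_entropy_le_nearly_constant:
  fixes f :: "real \<Rightarrow> real"
  assumes ab: "a < b" and cont: "continuous_on {a..b} f" and m: "0 < m" "1 \<le> \<rho>"
    and bounds: "\<And>x. x \<in> {a..b} \<Longrightarrow> m \<le> f x \<and> f x \<le> \<rho> * m"
  defines "p \<equiv> integral {a..b} f" and "e \<equiv> integral {a..b} (\<lambda>x. f x * ln (f x))"
  shows "- (p * ln p) \<le> - e - p * ln (b - a) + p * ln \<rho>"
proof -
  have nonneg: "\<And>x. x \<in> {a..b} \<Longrightarrow> 0 \<le> f x" using bounds m by (meson less_le_trans less_imp_le)
  have p_ge: "m * (b - a) \<le> p"
    using integral_le[OF integrable_const_ivl cell_integrable(1)[OF cont nonneg], of m] bounds ab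
    by (simp add: p_def mult.commute)
  then have p: "0 < p" using m ab by (smt (verit) mult_pos_pos)
  have entropy: "- (p * ln p) \<le> - e + p * ln (\<rho> * m / p)"
    unfolding p_def e_def using p m bounds
    by (intro cell_entropy_le[OF cont nonneg]) (auto simp: p_def)
  have "\<rho> * m / p \<le> \<rho> / (b - a)"
    using mult_left_mono[OF p_ge, of \<rho>] p m ab by (simp add: field_simps)
  then have "ln (\<rho> * m / p) \<le> ln (\<rho> / (b - a))" using p m ab by (subst ln_le_cancel_iff) auto
  then have "p * ln (\<rho> * m / p) \<le> p * ln (\<rho> / (b - a))" using p by simp
  with entropy show ?thesis using ab m by (simp add: ln_div algebra_simps)
qed

lemma midpoint_moment_le_nearly_constant:
  fixes f :: "real \<Rightarrow> real"
  assumes ab: "a < b" and cont: "continuous_on {a..b} f" and m: "0 < m" "1 \<le> \<rho>"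
    and bounds: "\<And>x. x \<in> {a..b} \<Longrightarrow> m \<le> f x \<and> f x \<le> \<rho> * m"
  shows "integral {a..b} (\<lambda>x. (x - (a + b) / 2)^2 * f x) \<le> \<rho> * integral {a..b} f * (b - a)^2 / 12"
proof -
  have nonneg: "\<And>x. x \<in> {a..b} \<Longrightarrow> 0 \<le> f x" using bounds m by (meson less_le_trans less_imp_le)
  have "m * (b - a) \<le> integral {a..b} f"
    using integral_le[OF integrable_const_ivl cell_integrable(1)[OF cont nonneg], of m] bounds ab
    by (simp add: mult.commute)
  then have "\<rho> * m * (b - a)^3 / 12 \<le> \<rho> * integral {a..b} f * (b - a)^2 / 12"
    using m ab by (simp add: power3_eq_cube power2_eq_square mult_left_mono mult_right_mono divide_right_mono
        flip: mult.assoc)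
  with midpoint_moment_le[OF less_imp_le[OF ab] cont nonneg, of "\<rho> * m"] bounds
  show ?thesis by force
qed

section \<open>Quantizers and real-valued codes\<close>

lemma quantizer_simps [simp]:
  "qcells (n, a, c) = n" "qbound (n, a, c) = a" "qrep (n, a, c) = c"
  "cell_prob f (n, a, c) i = integral {a (i - 1)..a i} f"
  "distortion f (n, a, c) = (\<Sum>i=1..n. integral {a (i - 1)..a i} (\<lambda>x. (x - c i)^2 * f x))"
  by (simp_all add: qcells_def qbound_def qrep_def cell_prob_def distortion_def)

lemma lift_Suc_mono_less_upto:
  fixes a :: "nat \<Rightarrow> real"
  assumes "\<forall>i<n. a i < a (Suc i)" "i < j" "j \<le> n"
  shows "a i < a j"
  using assms(2,3)
proof (induction j)
  case (Suc j)
  then show ?case using assms(1) by (cases "i = j") (auto intro: less_trans)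
qed simp

lemma quantizer_bound_mem:
  assumes "is_quantizer lo hi (n, a, c)" "i \<le> n"
  shows "a i \<in> {lo..hi}"
  using assms lift_Suc_mono_less_upto[of n a 0 i] lift_Suc_mono_less_upto[of n a i n]
  by (cases "i = 0"; cases "i = n") (auto simp: is_quantizer_def)

lemma quantizer_cell:
  assumes "is_quantizer lo hi (n, a, c)" "i \<in> {1..n}"
  shows "a (i - 1) < a i" "{a (i - 1)..a i} \<subseteq> {lo..hi}"
proof -
  show "a (i - 1) < a i" using assms by (auto simp: is_quantizer_def dest: spec[of _ "i - 1"])
  show "{a (i - 1)..a i} \<subseteq> {lo..hi}"
    using quantizer_bound_mem[OF assms(1), of "i - 1"] quantizer_bound_mem[OF assms(1), of i] assms(2)
    by auto
qed

lemma sum_integral_cells: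
  assumes Q: "is_quantizer lo hi (n, a, c)" and g: "g integrable_on {lo..hi}"
  shows "(\<Sum>i=1..n. integral {a (i - 1)..a i} g) = integral {lo..hi} (g :: real \<Rightarrow> real)"
proof -
  have "(\<Sum>i=1..k. integral {a (i - 1)..a i} g) = integral {a 0..a k} g" if "k \<le> n" for k
    using that
  proof (induction k)
    case (Suc k)
    have "a 0 \<le> a k" "a k \<le> a (Suc k)"
      using lift_Suc_mono_less_upto[of n a] Q Suc.prems by (cases "k = 0"; force simp: is_quantizer_def)+
    moreover have "g integrable_on {a 0..a (Suc k)}"
      using integrable_on_subinterval[OF g] quantizer_bound_mem[OF Q, of 0] quantizer_bound_mem[OF Q, of "Suc k"]
        Suc.prems by auto
    ultimately show ?case
      using Suc Henstock_Kurzweil_Integration.integral_combine by simp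
  qed simp
  then show ?thesis using Q by (simp add: is_quantizer_def)
qed

lemma sum_cell_lengths:
  assumes "is_quantizer lo hi (n, a, c)"
  shows "(\<Sum>i=1..n. a i - a (i - 1)) = hi - lo"
proof -
  have "(\<Sum>i=1..k. a i - a (i - 1)) = a k - a 0" for k
    by (induction k) auto
  then show ?thesis using assms by (simp add: is_quantizer_def)
qed

lemma uniform_num_cells:
  fixes lo hi \<delta> :: real
  assumes "lo < hi" "0 < \<delta>"
  defines "n \<equiv> nat \<lceil>(hi - lo) / \<delta>\<rceil>"
  shows "1 \<le> n" "(real n - 1) * \<delta> < hi - lo" "hi - lo \<le> real n * \<delta>"
proof -
  have q: "0 < (hi - lo) / \<delta>" using assms by simp
  then have n: "real n = of_int \<lceil>(hi - lo) / \<delta>\<rceil>" by (simp add: n_def)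
  show "1 \<le> n" using q unfolding n_def by linarith
  have "(hi - lo) / \<delta> \<le> real n" "real n - 1 < (hi - lo) / \<delta>" using n by linarith+
  then show "(real n - 1) * \<delta> < hi - lo" "hi - lo \<le> real n * \<delta>"
    using assms(2) by (simp_all add: pos_less_divide_eq pos_divide_le_eq)
qed

lemma uniform_quantizer_props:
  assumes lohi: "lo < hi" and \<delta>: "0 < \<delta>" and Q: "uniform_quantizer lo hi \<delta> = (n, a, c)"
  shows "is_quantizer lo hi (n, a, c)"
    and "\<And>i. i \<in> {1..n} \<Longrightarrow> a i - a (i - 1) \<le> \<delta>"
    and "\<And>i. i \<in> {1..n} \<Longrightarrow> i < n \<Longrightarrow> a i - a (i - 1) = \<delta>"
    and "\<And>i. c i = (a (i - 1) + a i) / 2"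
    and "real n * \<delta> \<le> hi - lo + \<delta>"
proof -
  have n: "n = nat \<lceil>(hi - lo) / \<delta>\<rceil>" and a: "a = (\<lambda>i. min (lo + real i * \<delta>) hi)"
    and c: "c = (\<lambda>i. (a (i - 1) + a i) / 2)"
    using Q by (auto simp: uniform_quantizer_def Let_def)
  note N = uniform_num_cells[OF lohi \<delta>, folded n]
  have a_below: "a i = lo + real i * \<delta>" if "i < n" for i
  proof -
    have "real i * \<delta> \<le> (real n - 1) * \<delta>" using that \<delta> by (intro mult_right_mono) auto
    then show ?thesis using N(2) by (simp add: a)
  qed
  have a_n: "a n = hi" using N(3) by (simp add: a)
  show "c i = (a (i - 1) + a i) / 2" for i by (simp add: c)
  show "real n * \<delta> \<le> hi - lo + \<delta>" using N(2) by (simp add: algebra_simps)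
  show len: "a i - a (i - 1) = \<delta>" if "i \<in> {1..n}" "i < n" for i
    using a_below[of i] a_below[of "i - 1"] that by (simp add: of_nat_diff algebra_simps)
  show "a i - a (i - 1) \<le> \<delta>" if i: "i \<in> {1..n}" for i
  proof (cases "i < n")
    case False
    then have "i = n" using i by simp
    then show ?thesis using a_n a_below[of "n - 1"] N by (simp add: of_nat_diff algebra_simps)
  qed (use len i in simp)
  show "is_quantizer lo hi (n, a, c)"
    unfolding is_quantizer_def
  proof (simp, intro conjI allI impI)
    show "Suc 0 \<le> n" "a 0 = lo" "a n = hi" using N(1) lohi a_n by (simp_all add: a)
    show "a i < a (Suc i)" if "i < n" for i
      using a_below[OF that] a_below[of "Suc i"] that \<delta> N(2) a_n
      by (cases "Suc i = n") (auto simp: algebra_simps)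
  qed
qed

lemma entropy_le_mean_length:
  fixes p l :: "'a \<Rightarrow> real"
  assumes p: "\<And>i. i \<in> A \<Longrightarrow> 0 < p i" "sum p A = 1" and kraft: "(\<Sum>i\<in>A. 2 powr (- l i)) \<le> 1"
  shows "- (\<Sum>i\<in>A. p i * ln (p i)) / ln 2 \<le> (\<Sum>i\<in>A. p i * l i)"
proof -
  have "- (p i * l i) * ln 2 - p i * ln (p i) \<le> 2 powr (- l i) - p i" if i: "i \<in> A" for i
    using mult_ln_ge_tangent[of "p i" "2 powr (- l i)"] p(1)[OF i] by (simp add: ln_powr algebra_simps)
  then have "(\<Sum>i\<in>A. - (p i * l i) * ln 2 - p i * ln (p i)) \<le> (\<Sum>i\<in>A. 2 powr (- l i) - p i)"
    by (rule sum_mono)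
  also have "\<dots> \<le> 0" using kraft p(2) by (simp add: sum_subtractf)
  finally have "- (\<Sum>i\<in>A. p i * ln (p i)) \<le> (\<Sum>i\<in>A. p i * l i) * ln 2"
    by (simp only: sum_subtractf sum_distrib_right[symmetric] sum_negf)
  then show ?thesis by (subst pos_divide_le_eq) auto
qed

lemma weighted_moment_about_eq:
  fixes p x :: "'a \<Rightarrow> real"
  assumes "sum p A = 1"
  shows "(\<Sum>i\<in>A. p i * (x i - t)^2)
    = (\<Sum>i\<in>A. p i * (x i)^2) - (\<Sum>i\<in>A. p i * x i)^2 + ((\<Sum>i\<in>A. p i * x i) - t)^2"
proof -
  have "(\<Sum>i\<in>A. p i * (x i - t)^2) = (\<Sum>i\<in>A. p i * (x i)^2) - 2 * t * (\<Sum>i\<in>A. p i * x i) + t^2 * sum p A"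
    by (simp add: power2_eq_square algebra_simps sum.distrib sum_subtractf sum_distrib_left)
  then show ?thesis using assms by (simp add: power2_eq_square algebra_simps)
qed

lemma square_mean_le_second_moment:
  fixes p l :: "'a \<Rightarrow> real"
  assumes "\<And>i. i \<in> A \<Longrightarrow> 0 \<le> p i" "sum p A = 1"
  shows "(\<Sum>i\<in>A. p i * l i)^2 \<le> (\<Sum>i\<in>A. p i * (l i)^2)"
proof -
  have "0 \<le> (\<Sum>i\<in>A. p i * (l i - (\<Sum>i\<in>A. p i * l i))^2)" using assms(1) by (intro sum_nonneg) simp
  then show ?thesis using weighted_moment_about_eq[OF assms(2), of l] by simp
qed

text \<open>Entropies are in nats: the paper's entropies in bits are these divided by \<open>ln 2\<close>.\<close>

definition quant_entropy :: "(real \<Rightarrow> real) \<Rightarrow> quantizer \<Rightarrow> real" where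
  "quant_entropy f Q = - (\<Sum>i=1..qcells Q. cell_prob f Q i * ln (cell_prob f Q i))"

definition quant_varentropy :: "(real \<Rightarrow> real) \<Rightarrow> quantizer \<Rightarrow> real" where
  "quant_varentropy f Q =
     (\<Sum>i=1..qcells Q. cell_prob f Q i * (ln (cell_prob f Q i))^2) - (quant_entropy f Q)^2"

lemma quant_entropy_nonneg:
  assumes p: "\<And>i. i \<in> {1..qcells Q} \<Longrightarrow> 0 < cell_prob f Q i" "(\<Sum>i=1..qcells Q. cell_prob f Q i) = 1"
  shows "0 \<le> quant_entropy f Q"
proof -
  have "cell_prob f Q i * ln (cell_prob f Q i) \<le> 0" if i: "i \<in> {1..qcells Q}" for i
  proof -
    have "cell_prob f Q i \<le> 1"
      using member_le_sum[of i "{1..qcells Q}" "cell_prob f Q"] i p by (simp add: less_imp_le)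
    then show ?thesis using p(1)[OF i] by (intro mult_nonneg_nonpos) auto
  qed
  then have "(\<Sum>i=1..qcells Q. cell_prob f Q i * ln (cell_prob f Q i)) \<le> 0" by (rule sum_nonpos)
  then show ?thesis by (simp add: quant_entropy_def)
qed

lemma aoi_zw_ge_entropy:
  assumes p: "\<And>i. i \<in> {1..qcells Q} \<Longrightarrow> 0 < cell_prob f Q i" "(\<Sum>i=1..qcells Q. cell_prob f Q i) = 1"
    and l: "is_real_code Q l"
  shows "3/2 * (quant_entropy f Q / ln 2) \<le> aoi_zw f Q l"
proof -
  have H: "quant_entropy f Q / ln 2 \<le> EL f Q l"
    using entropy_le_mean_length[OF p] l by (simp add: is_real_code_def quant_entropy_def EL_def)
  have "qcells Q \<noteq> 0" using p(2) by (cases "qcells Q") auto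
  then have "0 < EL f Q l"
    unfolding EL_def using p l by (intro sum_pos) (auto simp: is_real_code_def)
  moreover have "(EL f Q l)^2 \<le> EL2 f Q l"
    unfolding EL_def EL2_def using p by (intro square_mean_le_second_moment) (auto simp: less_imp_le)
  ultimately have "EL f Q l / 2 \<le> EL2 f Q l / (2 * EL f Q l)"
    by (simp add: field_simps power2_eq_square)
  then show ?thesis using H by (simp add: aoi_zw_def)
qed

lemma aoi_opt_ge_entropy:
  assumes p: "\<And>i. i \<in> {1..qcells Q} \<Longrightarrow> 0 < cell_prob f Q i" "(\<Sum>i=1..qcells Q. cell_prob f Q i) = 1"
  shows "3/2 * (quant_entropy f Q / ln 2) \<le> aoi_opt f Q"
proof -
  define n where "n = qcells Q"
  have n: "1 \<le> n" using p(2) by (cases "n = 0") (auto simp: n_def)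
  have "2 powr (log 2 n + 1) = 2 * n" using n by (simp add: powr_add)
  then have "2 powr (- (log 2 n + 1)) = 1 / (2 * n)" by (simp only: powr_minus_divide)
  then have "is_real_code Q (\<lambda>i. log 2 n + 1)"
    using n by (simp add: is_real_code_def n_def[symmetric] add_nonneg_pos)
  then show ?thesis
    unfolding aoi_opt_def using aoi_zw_ge_entropy[OF p] by (intro cInf_greatest) auto
qed

lemma aoi_opt_le_entropy_varentropy:
  assumes p: "\<And>i. i \<in> {1..qcells Q} \<Longrightarrow> 0 < cell_prob f Q i" "(\<Sum>i=1..qcells Q. cell_prob f Q i) = 1"
    and p1: "\<And>i. i \<in> {1..qcells Q} \<Longrightarrow> cell_prob f Q i < 1"
  defines "H \<equiv> quant_entropy f Q"
  shows "aoi_opt f Q \<le> 3/2 * (H / ln 2) + quant_varentropy f Q / (2 * ln 2 * H)"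
proof -
  define l where "l i = - ln (cell_prob f Q i) / ln 2" for i
  have code: "is_real_code Q l"
    using p p1 by (simp add: is_real_code_def l_def powr_def divide_less_0_iff)
  have EL_eq: "EL f Q l = H / ln 2"
    by (simp add: EL_def H_def quant_entropy_def l_def sum_divide_distrib sum_negf)
  have EL2_eq: "EL2 f Q l = (quant_varentropy f Q + H^2) / (ln 2)^2"
    by (simp add: EL2_def quant_varentropy_def H_def l_def sum_divide_distrib power_divide)
  have H: "H \<noteq> 0"
  proof -
    have "qcells Q \<noteq> 0" using p(2) by (cases "qcells Q") auto
    moreover have "0 < - (cell_prob f Q i * ln (cell_prob f Q i))" if "i \<in> {1..qcells Q}" for i
      using p(1)[OF that] p1[OF that] by (simp add: mult_pos_neg)
    ultimately have "0 < H"
      unfolding H_def quant_entropy_def sum_negf[symmetric] by (intro sum_pos) auto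
    then show ?thesis by simp
  qed
  have "aoi_zw f Q l = 3/2 * (H / ln 2) + quant_varentropy f Q / (2 * ln 2 * H)"
    unfolding aoi_zw_def EL_eq EL2_eq using H by (simp add: field_simps power2_eq_square)
  moreover have "aoi_opt f Q \<le> aoi_zw f Q l"
    unfolding aoi_opt_def
  proof (rule cInf_lower)
    show "bdd_below {aoi_zw f Q l |l. is_real_code Q l}"
      using aoi_zw_ge_entropy[OF p] quant_entropy_nonneg[OF p]
      by (intro bdd_belowI[of _ 0]) (fastforce intro: order.trans[rotated])
  qed (use code in blast)
  ultimately show ?thesis by simp
qed

section \<open>Continuous densities on an interval\<close>

locale interval_density =
  fixes f :: "real \<Rightarrow> real" and lo hi :: real
  assumes lohi: "lo < hi" and nonneg: "\<And>x. 0 \<le> f x"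
    and support: "closure {x. f x \<noteq> 0} = {lo..hi}"
    and cont: "continuous_on {lo..hi} f" and total: "integral {lo..hi} f = 1"
begin

definition diff_entropy :: real where
  "diff_entropy = - integral {lo..hi} (\<lambda>x. f x * ln (f x))"

lemma integral_pos_on_subinterval:
  assumes "lo \<le> u" "u < v" "v \<le> hi"
  shows "0 < integral {u..v} f" "0 < integral {u..v} (\<lambda>x. (x - c)^2 * f x)"
proof -
  have cont_uv: "continuous_on {u..v} f" using assms by (intro continuous_on_subset[OF cont]) auto
  define U where "U = {u<..<v} - {c}"
  have "open U" by (auto simp: U_def intro!: open_Diff)
  have "(u + v) / 2 \<in> {u<..<v}" "(u + 3 * v) / 4 \<in> {u<..<v}" "(u + v) / 2 \<noteq> (u + 3 * v) / 4"
    using assms by auto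
  then have "U \<noteq> {}" unfolding U_def by blast
  moreover have "U \<subseteq> closure {x. f x \<noteq> 0}" using support assms by (auto simp: U_def)
  ultimately have "U \<inter> closure {x. f x \<noteq> 0} \<noteq> {}" by auto
  then have "U \<inter> {x. f x \<noteq> 0} \<noteq> {}" using open_Int_closure_eq_empty[OF \<open>open U\<close>] by auto
  then obtain x where x: "x \<in> U" "f x \<noteq> 0" by blast
  then have x: "x \<in> {u..v}" "x \<noteq> c" "f x \<noteq> 0" by (auto simp: U_def)
  have "integral {u..v} f \<noteq> 0"
    using integral_eq_0_iff[OF cont_uv assms(2)] nonneg x by auto
  moreover have "integral {u..v} (\<lambda>x. (x - c)^2 * f x) \<noteq> 0"
  proof -
    have "continuous_on {u..v} (\<lambda>x. (x - c)^2 * f x)" using cont_uv by (intro continuous_intros)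
    then show ?thesis using integral_eq_0_iff[of u v "\<lambda>x. (x - c)^2 * f x"] assms(2) nonneg x by auto
  qed
  moreover have "0 \<le> integral {u..v} f" "0 \<le> integral {u..v} (\<lambda>x. (x - c)^2 * f x)"
    using cell_integrable[OF cont_uv] nonneg by (auto intro!: integral_nonneg)
  ultimately show "0 < integral {u..v} f" "0 < integral {u..v} (\<lambda>x. (x - c)^2 * f x)" by auto
qed

lemma quantizer_cell_pos:
  assumes "is_quantizer lo hi (n, a, c)" "i \<in> {1..n}"
  shows "0 < integral {a (i - 1)..a i} f" "0 < integral {a (i - 1)..a i} (\<lambda>x. (x - c')^2 * f x)"
  using integral_pos_on_subinterval quantizer_cell[OF assms] by auto

lemma cell_prob_pos:
  assumes "is_quantizer lo hi Q" "i \<in> {1..qcells Q}"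
  shows "0 < cell_prob f Q i"
  using assms quantizer_cell_pos(1) by (cases Q) auto

lemma sum_cell_prob:
  assumes "is_quantizer lo hi Q"
  shows "(\<Sum>i=1..qcells Q. cell_prob f Q i) = 1"
  using assms sum_integral_cells integrable_continuous_real[OF cont] total by (cases Q) auto

lemma sum_cell_mult_ln:
  assumes "is_quantizer lo hi (n, a, c)"
  shows "(\<Sum>i=1..n. integral {a (i - 1)..a i} (\<lambda>x. f x * ln (f x))) = - diff_entropy"
  using sum_integral_cells[OF assms cell_integrable(3)[OF cont]] nonneg by (simp add: diff_entropy_def)

lemma distortion_pos:
  assumes "is_quantizer lo hi Q"
  shows "0 < distortion f Q"
proof (cases Q)
  case (fields n a c)
  then show ?thesis
    using assms quantizer_cell_pos(2) by (auto simp: is_quantizer_def intro!: sum_pos)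
qed

lemma uniform_cell:
  assumes \<delta>: "0 < \<delta>" and U: "uniform_quantizer lo hi \<delta> = (n, a, c)" and i: "i \<in> {1..n}"
  shows "a (i - 1) < a i" "{a (i - 1)..a i} \<subseteq> {lo..hi}" "a i - a (i - 1) \<le> \<delta>"
    "continuous_on {a (i - 1)..a i} f" "0 < integral {a (i - 1)..a i} f"
proof -
  note props = uniform_quantizer_props[OF lohi \<delta> U]
  show "a (i - 1) < a i" "{a (i - 1)..a i} \<subseteq> {lo..hi}" by (fact quantizer_cell[OF props(1) i])+
  then show "continuous_on {a (i - 1)..a i} f" by (intro continuous_on_subset[OF cont])
  show "a i - a (i - 1) \<le> \<delta>" by (rule props(2)[OF i])
  show "0 < integral {a (i - 1)..a i} f" by (rule quantizer_cell_pos(1)[OF props(1) i])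
qed

lemma bounded_above:
  obtains M where "1 \<le> M" "\<And>x. x \<in> {lo..hi} \<Longrightarrow> f x \<le> M"
proof -
  have "bounded (f ` {lo..hi})" by (rule compact_imp_bounded[OF compact_continuous_image[OF cont compact_Icc]])
  then obtain B where "\<And>x. x \<in> {lo..hi} \<Longrightarrow> \<bar>f x\<bar> \<le> B" unfolding bounded_real by blast
  then show thesis by (intro that[of "max 1 B"]) force+
qed

lemma modulus_of_continuity:
  assumes "0 < \<epsilon>"
  obtains \<eta> where "0 < \<eta>"
    "\<And>x y. x \<in> {lo..hi} \<Longrightarrow> y \<in> {lo..hi} \<Longrightarrow> \<bar>x - y\<bar> \<le> \<eta> \<Longrightarrow> \<bar>f x - f y\<bar> \<le> \<epsilon>^2"
proof -
  obtain d where d: "0 < d" "\<And>x y. x \<in> {lo..hi} \<Longrightarrow> y \<in> {lo..hi} \<Longrightarrow> dist y x < d \<Longrightarrow> dist (f y) (f x) < \<epsilon>^2"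
    using compact_uniformly_continuous[OF cont compact_Icc] assms
    unfolding uniformly_continuous_on_def by (metis zero_less_power)
  show thesis
  proof (rule that[of "d / 2"])
    show "\<bar>f x - f y\<bar> \<le> \<epsilon>^2" if "x \<in> {lo..hi}" "y \<in> {lo..hi}" "\<bar>x - y\<bar> \<le> d / 2" for x y
      using d(2)[of y x] that d(1) by (simp add: dist_real_def)
  qed (use d in simp)
qed

definition aoi_gap :: "real \<Rightarrow> real" where
  "aoi_gap \<delta> = aoi_opt f (uniform_quantizer lo hi \<delta>)
     - Inf {aoi_opt f Q | Q. is_quantizer lo hi Q \<and> distortion f Q \<le> distortion f (uniform_quantizer lo hi \<delta>)}"

lemma aoi_opt_ge_quant_entropy:
  assumes "is_quantizer lo hi Q"
  shows "3/2 * (quant_entropy f Q / ln 2) \<le> aoi_opt f Q"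
  using aoi_opt_ge_entropy cell_prob_pos[OF assms] sum_cell_prob[OF assms] by blast

lemma aoi_opt_nonneg:
  assumes "is_quantizer lo hi Q"
  shows "0 \<le> aoi_opt f Q"
proof -
  have "0 \<le> quant_entropy f Q"
    using cell_prob_pos[OF assms] sum_cell_prob[OF assms] by (rule quant_entropy_nonneg)
  then have "0 \<le> 3/2 * (quant_entropy f Q / ln 2)" by simp
  then show ?thesis using aoi_opt_ge_quant_entropy[OF assms] by linarith
qed

lemma aoi_gap_le:
  fixes \<delta> \<beta> :: real
  defines "U \<equiv> uniform_quantizer lo hi \<delta>"
  assumes \<delta>: "0 < \<delta>" and p_lt_1: "\<And>i. i \<in> {1..qcells U} \<Longrightarrow> cell_prob f U i < 1"
    and gap: "\<And>Q. is_quantizer lo hi Q \<Longrightarrow> distortion f Q \<le> distortion f U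
      \<Longrightarrow> quant_entropy f U - quant_entropy f Q \<le> \<beta>"
  shows "0 \<le> aoi_gap \<delta>"
    and "aoi_gap \<delta> \<le> 3/2 * (\<beta> / ln 2) + quant_varentropy f U / (2 * ln 2 * quant_entropy f U)"
proof -
  define S where "S = {aoi_opt f Q | Q. is_quantizer lo hi Q \<and> distortion f Q \<le> distortion f U}"
  have U: "is_quantizer lo hi U"
    using uniform_quantizer_props(1)[OF lohi \<delta>] by (metis U_def prod_cases3)
  have U_in: "aoi_opt f U \<in> S" using U unfolding S_def by blast
  have S_ge: "3/2 * ((quant_entropy f U - \<beta>) / ln 2) \<le> x" if x: "x \<in> S" for x
  proof -
    obtain Q where Q: "is_quantizer lo hi Q" "distortion f Q \<le> distortion f U" "x = aoi_opt f Q"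
      using x unfolding S_def by blast
    have "(quant_entropy f U - \<beta>) / ln 2 \<le> quant_entropy f Q / ln 2"
      using gap[OF Q(1,2)] by (simp add: divide_right_mono)
    then show ?thesis using aoi_opt_ge_quant_entropy[OF Q(1)] Q(3) by linarith
  qed
  have "bdd_below S" unfolding S_def using aoi_opt_nonneg by (intro bdd_belowI[of _ 0]) blast
  then have "Inf S \<le> aoi_opt f U" using U_in by (rule cInf_lower[rotated])
  then show "0 \<le> aoi_gap \<delta>" by (simp add: aoi_gap_def S_def U_def)
  have "3/2 * ((quant_entropy f U - \<beta>) / ln 2) \<le> Inf S"
    using U_in S_ge by (intro cInf_greatest) auto
  moreover have "aoi_opt f U \<le> 3/2 * (quant_entropy f U / ln 2) + quant_varentropy f U / (2 * ln 2 * quant_entropy f U)"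
    using aoi_opt_le_entropy_varentropy cell_prob_pos[OF U] sum_cell_prob[OF U] p_lt_1 by blast
  ultimately show "aoi_gap \<delta> \<le> 3/2 * (\<beta> / ln 2) + quant_varentropy f U / (2 * ln 2 * quant_entropy f U)"
    by (simp add: aoi_gap_def S_def U_def[symmetric] diff_divide_distrib algebra_simps)
qed

end

locale bounded_interval_density = interval_density +
  fixes M :: real
  assumes M_ge_1: "1 \<le> M" and bounded: "\<And>x. x \<in> {lo..hi} \<Longrightarrow> f x \<le> M"
begin

lemma uniform_cell_prob_le:
  assumes "0 < \<delta>" "i \<in> {1..qcells (uniform_quantizer lo hi \<delta>)}"
  shows "cell_prob f (uniform_quantizer lo hi \<delta>) i \<le> M * \<delta>"
proof -
  obtain n a c where U: "uniform_quantizer lo hi \<delta> = (n, a, c)" by (metis prod_cases3)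
  note props = uniform_quantizer_props[OF lohi assms(1) U]
  have i: "i \<in> {1..n}" using assms(2) U by simp
  note cell = quantizer_cell[OF props(1) i]
  have "integral {a (i - 1)..a i} f \<le> M * (a i - a (i - 1))"
    using integral_le[OF integrable_continuous_real integrable_const_ivl, of "a (i - 1)" "a i" f M]
      continuous_on_subset[OF cont cell(2)] bounded cell by (auto simp: mult.commute)
  also have "\<dots> \<le> M * \<delta>" using props(2)[OF i] M_ge_1 by simp
  finally show ?thesis using U by simp
qed

lemma uniform_entropy_ge:
  assumes "0 < \<delta>"
  shows "- ln (M * \<delta>) \<le> quant_entropy f (uniform_quantizer lo hi \<delta>)"
proof -
  define U where "U = uniform_quantizer lo hi \<delta>"
  have Q: "is_quantizer lo hi U"
    using uniform_quantizer_props(1)[OF lohi assms] by (metis U_def prod_cases3)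
  have "cell_prob f U i * ln (cell_prob f U i) \<le> cell_prob f U i * ln (M * \<delta>)" if "i \<in> {1..qcells U}" for i
    using cell_prob_pos[OF Q that] uniform_cell_prob_le[OF assms that[unfolded U_def]]
    by (intro mult_left_mono) (auto simp: U_def)
  then have "(\<Sum>i=1..qcells U. cell_prob f U i * ln (cell_prob f U i))
      \<le> (\<Sum>i=1..qcells U. cell_prob f U i * ln (M * \<delta>))"
    by (rule sum_mono)
  also have "\<dots> = (\<Sum>i=1..qcells U. cell_prob f U i) * ln (M * \<delta>)" by (simp add: sum_distrib_right)
  finally show ?thesis using sum_cell_prob[OF Q] by (simp add: U_def quant_entropy_def)
qed

lemma uniform_varentropy_le:
  assumes \<delta>: "0 < \<delta>"
  shows "quant_varentropy f (uniform_quantizer lo hi \<delta>) \<le> (hi - lo + \<delta>) * (4 + M^3)"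
proof -
  obtain n a c where U: "uniform_quantizer lo hi \<delta> = (n, a, c)" by (metis prod_cases3)
  note props = uniform_quantizer_props[OF lohi \<delta> U]
  define p where "p i = cell_prob f (n, a, c) i" for i
  have p: "0 < p i" "p i \<le> M * \<delta>" if "i \<in> {1..n}" for i
    using cell_prob_pos[OF props(1)] uniform_cell_prob_le[OF \<delta>] that U by (simp_all add: p_def)
  have "quant_varentropy f (n, a, c) \<le> (\<Sum>i=1..n. p i * (ln (p i) - ln \<delta>)^2)"
    using weighted_moment_about_eq[of p "{1..n}" "\<lambda>i. ln (p i)" "ln \<delta>"] sum_cell_prob[OF props(1)]
    by (simp add: quant_varentropy_def quant_entropy_def p_def)
  also have "\<dots> \<le> (\<Sum>i=1..n. \<delta> * (4 + M^3))"
  proof (rule sum_mono)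
    fix i assume i: "i \<in> {1..n}"
    have "p i * (ln (p i) - ln \<delta>)^2 = \<delta> * (p i / \<delta> * (ln (p i / \<delta>))^2)"
      using p[OF i] \<delta> by (simp add: ln_div)
    also have "\<dots> \<le> \<delta> * (4 + M^3)"
      using mult_ln_squared_le[of "p i / \<delta>" M] p[OF i] \<delta> M_ge_1 by (simp add: pos_divide_le_eq mult.commute)
    finally show "p i * (ln (p i) - ln \<delta>)^2 \<le> \<delta> * (4 + M^3)" .
  qed
  also have "\<dots> \<le> (hi - lo + \<delta>) * (4 + M^3)"
    using props(5) M_ge_1 by (simp add: mult_right_mono mult.assoc[symmetric])
  finally show ?thesis using U by simp
qed

end

section \<open>Entropy estimates under a modulus of continuity\<close>

text \<open>The oscillation of \<open>f\<close> over distances \<open>\<eta>\<close> is at most \<open>\<epsilon>^2\<close>, so on a cell shorter than \<open>\<eta>\<close>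
  either \<open>f < 2 * \<epsilon>\<close>, or \<open>f \<ge> \<epsilon>\<close> and \<open>f\<close> is constant up to the factor \<open>(1 + \<epsilon>) / (1 - \<epsilon>)\<close>.\<close>

locale density_modulus = bounded_interval_density +
  fixes \<epsilon> \<eta> :: real
  assumes eps: "0 < \<epsilon>" "\<epsilon> \<le> 1/2" and eta: "0 < \<eta>"
    and modulus: "\<And>x y. x \<in> {lo..hi} \<Longrightarrow> y \<in> {lo..hi} \<Longrightarrow> \<bar>x - y\<bar> \<le> \<eta> \<Longrightarrow> \<bar>f x - f y\<bar> \<le> \<epsilon>^2"
begin

lemma ratio_ge_1: "1 \<le> (1 + \<epsilon>) / (1 - \<epsilon>)"
  using eps by simp

lemma ratio_minus_1_le: "(1 + \<epsilon>) / (1 - \<epsilon>) - 1 \<le> 4 * \<epsilon>"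
proof -
  have "(1 + \<epsilon>) / (1 - \<epsilon>) - 1 = 2 * \<epsilon> / (1 - \<epsilon>)" using eps by (simp add: field_simps)
  also have "\<dots> \<le> 4 * \<epsilon>" using eps by (simp add: divide_le_eq algebra_simps)
  finally show ?thesis .
qed

lemma nearly_constant_on_cell:
  assumes cell: "{u..v} \<subseteq> {lo..hi}" "u \<le> v" "v - u \<le> \<eta>" and large: "\<epsilon> \<le> f u"
  obtains m where "0 < m" "\<And>x. x \<in> {u..v} \<Longrightarrow> m \<le> f x \<and> f x \<le> (1 + \<epsilon>) / (1 - \<epsilon>) * m"
proof
  define m where "m = f u - \<epsilon>^2"
  have m: "\<epsilon> * (1 - \<epsilon>) \<le> m" using large by (simp add: m_def power2_eq_square algebra_simps)
  moreover have "0 < \<epsilon> * (1 - \<epsilon>)" using eps by simp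
  ultimately show "0 < m" by linarith
  have "2 * \<epsilon>^2 * (1 - \<epsilon>) \<le> 2 * \<epsilon> * m"
    using mult_left_mono[OF m, of "2 * \<epsilon>"] eps by (simp add: power2_eq_square algebra_simps)
  then have ratio: "m + 2 * \<epsilon>^2 \<le> (1 + \<epsilon>) / (1 - \<epsilon>) * m" using eps by (simp add: field_simps)
  show "m \<le> f x \<and> f x \<le> (1 + \<epsilon>) / (1 - \<epsilon>) * m" if x: "x \<in> {u..v}" for x
  proof -
    have "x \<in> {lo..hi}" "u \<in> {lo..hi}" "\<bar>x - u\<bar> \<le> \<eta>" using x cell by auto
    then have "\<bar>f x - f u\<bar> \<le> \<epsilon>^2" by (rule modulus)
    then show ?thesis using ratio by (simp add: m_def abs_le_iff)
  qed
qed

lemma small_on_cell: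
  assumes cell: "{u..v} \<subseteq> {lo..hi}" "u \<le> v" "v - u \<le> \<eta>" and small: "f u < \<epsilon>" and x: "x \<in> {u..v}"
  shows "f x \<le> 2 * \<epsilon>"
proof -
  have "x \<in> {lo..hi}" "u \<in> {lo..hi}" "\<bar>x - u\<bar> \<le> \<eta>" using x cell by auto
  then have "\<bar>f x - f u\<bar> \<le> \<epsilon>^2" by (rule modulus)
  moreover have "\<epsilon>^2 \<le> \<epsilon>" using eps by (simp add: power2_eq_square mult_left_le_one_le)
  ultimately show ?thesis using small by linarith
qed

lemma cell_mass_le_of_not_nearly_constant:
  assumes cell: "{u..v} \<subseteq> {lo..hi}" "u < v" and r: "0 < r" and not_const: "\<not> (v - u \<le> \<eta> \<and> \<epsilon> \<le> f u)"
  shows "integral {u..v} f \<le> integral {u..v} (\<lambda>x. (x - c)^2 * f x) / r^2 + (pi * M * r / \<eta> + 2 * \<epsilon>) * (v - u)"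
proof -
  have cont_uv: "continuous_on {u..v} f" using cell by (intro continuous_on_subset[OF cont])
  have d: "0 \<le> integral {u..v} (\<lambda>x. (x - c)^2 * f x) / r^2"
    by (intro divide_nonneg_nonneg integral_nonneg cell_integrable(2)[OF cont_uv]) (simp_all add: nonneg)
  have M: "0 \<le> pi * M * r / \<eta> * (v - u)" using M_ge_1 r eta cell by simp
  show ?thesis
  proof (cases "v - u \<le> \<eta>")
    case True
    then have "integral {u..v} f \<le> 2 * \<epsilon> * (v - u)"
      using integral_le[OF cell_integrable(1)[OF cont_uv] integrable_const_ivl, of "2 * \<epsilon>"]
        small_on_cell[OF cell(1) less_imp_le[OF cell(2)] True] not_const nonneg cell(2)
      by (auto simp: mult_ac)
    then show ?thesis using d M by (simp add: algebra_simps)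
  next
    case False
    have "integral {u..v} f \<le> integral {u..v} (\<lambda>x. (x - c)^2 * f x) / r^2 + pi * M * r"
      using cell bounded by (intro cell_mass_le[OF cell(2) cont_uv _ _ r]) (auto simp: nonneg)
    moreover have "pi * M * r \<le> pi * M * r / \<eta> * (v - u)"
      using mult_left_mono[of 1 "(v - u) / \<eta>" "pi * M * r"] False eta M_ge_1 r by simp
    moreover have "0 \<le> 2 * \<epsilon> * (v - u)" using eps cell by simp
    ultimately show ?thesis by (simp add: distrib_right)
  qed
qed

lemma cell_entropy_ge_modulus:
  fixes c :: real
  assumes cell: "{u..v} \<subseteq> {lo..hi}" "u < v" and r: "0 < r"
  defines "p \<equiv> integral {u..v} f" and "d \<equiv> integral {u..v} (\<lambda>x. (x - c)^2 * f x)"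
    and "e \<equiv> integral {u..v} (\<lambda>x. f x * ln (f x))"
  assumes p: "0 < p" and d: "0 < d"
  shows "- e - p / 2 * ln (12 * ((1 + \<epsilon>) / (1 - \<epsilon>)) * d / p)
      - pi * (d / r^2 + (pi * M * r / \<eta> + 2 * \<epsilon>) * (v - u)) \<le> - (p * ln p)"
proof -
  have cont_uv: "continuous_on {u..v} f" using cell by (intro continuous_on_subset[OF cont])
  have extra: "0 \<le> pi * (d / r^2 + (pi * M * r / \<eta> + 2 * \<epsilon>) * (v - u))"
    using d r eta eps M_ge_1 cell by simp
  show ?thesis
  proof (cases "v - u \<le> \<eta> \<and> \<epsilon> \<le> f u")
    case True
    obtain m where m: "0 < m" "\<And>x. x \<in> {u..v} \<Longrightarrow> m \<le> f x \<and> f x \<le> (1 + \<epsilon>) / (1 - \<epsilon>) * m"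
      by (rule nearly_constant_on_cell[OF cell(1) less_imp_le[OF cell(2)]]) (use True in auto)
    have "- e - p / 2 * ln (12 * ((1 + \<epsilon>) / (1 - \<epsilon>)) * d / p) \<le> - (p * ln p)"
      unfolding p_def d_def e_def by (rule cell_entropy_ge_nearly_constant[OF cell(2) cont_uv m(1) ratio_ge_1 m(2)])
    then show ?thesis using extra by linarith
  next
    case False
    have "ln (d / p) \<le> ln (12 * ((1 + \<epsilon>) / (1 - \<epsilon>)) * d / p)"
    proof -
      define k where "k = 12 * ((1 + \<epsilon>) / (1 - \<epsilon>))"
      have "1 \<le> k" using eps by (simp add: k_def)
      then have "ln (d / p) \<le> ln k + ln (d / p)" by simp
      also have "\<dots> = ln (k * d / p)" using ln_mult[of k "d / p"] \<open>1 \<le> k\<close> d p by simp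
      finally show ?thesis by (simp add: k_def)
    qed
    then have "p / 2 * ln (d / p) \<le> p / 2 * ln (12 * ((1 + \<epsilon>) / (1 - \<epsilon>)) * d / p)"
      using p by (simp add: mult_left_mono)
    moreover have "pi * p \<le> pi * (d / r^2 + (pi * M * r / \<eta> + 2 * \<epsilon>) * (v - u))"
      using cell_mass_le_of_not_nearly_constant[OF cell r False, of c] by (simp add: p_def d_def)
    moreover have "- e - p / 2 * ln (d / p) - pi * p \<le> - (p * ln p)"
      unfolding p_def d_def e_def
      by (rule cell_entropy_ge[OF cell(2) cont_uv]) (use nonneg p d in \<open>simp_all add: p_def d_def\<close>)
    ultimately show ?thesis by linarith
  qed
qed

lemma quant_entropy_ge:
  assumes Q: "is_quantizer lo hi Q" and r: "0 < r"
  shows "diff_entropy - ln (12 * ((1 + \<epsilon>) / (1 - \<epsilon>)) * distortion f Q) / 2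
      - pi * (distortion f Q / r^2 + (pi * M * r / \<eta> + 2 * \<epsilon>) * (hi - lo)) \<le> quant_entropy f Q"
proof -
  obtain n a c where Q_eq: "Q = (n, a, c)" by (cases Q)
  note Q' = Q[unfolded Q_eq]
  define \<rho> where "\<rho> = (1 + \<epsilon>) / (1 - \<epsilon>)"
  have \<rho>: "0 < \<rho>" using ratio_ge_1 by (simp add: \<rho>_def)
  define K where "K = pi * M * r / \<eta> + 2 * \<epsilon>"
  define p where "p i = integral {a (i - 1)..a i} f" for i
  define d where "d i = integral {a (i - 1)..a i} (\<lambda>x. (x - c i)^2 * f x)" for i
  define e where "e i = integral {a (i - 1)..a i} (\<lambda>x. f x * ln (f x))" for i
  have pos: "0 < p i" "0 < d i" if "i \<in> {1..n}" for i
    using quantizer_cell_pos[OF Q' that] by (simp_all add: p_def d_def)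
  define len where "len i = a i - a (i - 1)" for i
  have "(\<Sum>i=1..n. - e i - p i / 2 * ln (12 * \<rho> * d i / p i) - pi * (d i / r^2 + K * len i))
      \<le> (\<Sum>i=1..n. - (p i * ln (p i)))"
    using cell_entropy_ge_modulus[OF quantizer_cell(2,1)[OF Q'] r] pos
    by (intro sum_mono) (simp add: p_def d_def e_def \<rho>_def K_def len_def)
  also have "(\<Sum>i=1..n. - (p i * ln (p i))) = quant_entropy f Q"
    by (simp add: Q_eq quant_entropy_def p_def sum_negf)
  also have "(\<Sum>i=1..n. - e i - p i / 2 * ln (12 * \<rho> * d i / p i) - pi * (d i / r^2 + K * len i))
      = - (\<Sum>i=1..n. e i) - (\<Sum>i=1..n. p i * ln (12 * \<rho> * d i / p i)) / 2
        - pi * ((\<Sum>i=1..n. d i) / r^2 + K * (\<Sum>i=1..n. len i))"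
    by (simp add: sum_subtractf sum_negf sum_distrib_left sum.distrib sum_divide_distrib algebra_simps)
  finally have entropy: "- (\<Sum>i=1..n. e i) - (\<Sum>i=1..n. p i * ln (12 * \<rho> * d i / p i)) / 2
      - pi * ((\<Sum>i=1..n. d i) / r^2 + K * (\<Sum>i=1..n. len i)) \<le> quant_entropy f Q" .
  moreover have "(\<Sum>i=1..n. p i * ln (12 * \<rho> * d i / p i)) \<le> ln (\<Sum>i=1..n. 12 * \<rho> * d i)"
  proof (rule sum_mult_ln_div_le_ln_sum)
    show "(\<Sum>i=1..n. p i) = 1" using sum_cell_prob[OF Q] by (simp add: Q_eq p_def)
    show "0 < 12 * \<rho> * d i" if "i \<in> {1..n}" for i using pos(2)[OF that] \<rho> by simp
  qed (use pos Q' in \<open>auto simp: is_quantizer_def\<close>)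
  moreover have "(\<Sum>i=1..n. e i) = - diff_entropy" using sum_cell_mult_ln[OF Q'] by (simp add: e_def)
  moreover have "(\<Sum>i=1..n. 12 * \<rho> * d i) = 12 * \<rho> * distortion f Q" "(\<Sum>i=1..n. d i) = distortion f Q"
    by (simp_all add: Q_eq d_def sum_distrib_left)
  moreover have "(\<Sum>i=1..n. len i) = hi - lo" using sum_cell_lengths[OF Q'] by (simp add: len_def)
  ultimately show ?thesis by (simp add: \<rho>_def K_def)
qed

lemma uniform_cell_cases:
  assumes \<delta>: "0 < \<delta>" "\<delta> \<le> \<eta>" and U: "uniform_quantizer lo hi \<delta> = (n, a, c)" and i: "i \<in> {1..n}"
  obtains (last) "i = n"
  | (flat) m where "i \<noteq> n" "a i - a (i - 1) = \<delta>" "0 < m"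
      "\<And>x. x \<in> {a (i - 1)..a i} \<Longrightarrow> m \<le> f x \<and> f x \<le> (1 + \<epsilon>) / (1 - \<epsilon>) * m"
  | (small) "i \<noteq> n" "a i - a (i - 1) = \<delta>" "\<And>x. x \<in> {a (i - 1)..a i} \<Longrightarrow> f x \<le> 2 * \<epsilon>"
proof (cases "i = n")
  case False
  note cell = uniform_cell[OF \<delta>(1) U i]
  have len: "a i - a (i - 1) = \<delta>" using uniform_quantizer_props(3)[OF lohi \<delta>(1) U i] i False by simp
  show thesis
  proof (cases "\<epsilon> \<le> f (a (i - 1))")
    case True
    then obtain m where "0 < m" "\<And>x. x \<in> {a (i - 1)..a i} \<Longrightarrow> m \<le> f x \<and> f x \<le> (1 + \<epsilon>) / (1 - \<epsilon>) * m"
      using nearly_constant_on_cell[OF cell(2) less_imp_le[OF cell(1)]] len \<delta>(2) by blast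
    then show thesis using flat False len by blast
  next
    case False
    then show thesis
      using small \<open>i \<noteq> n\<close> len small_on_cell[OF cell(2) less_imp_le[OF cell(1)]] \<delta>(2) by simp
  qed
qed (rule last)

lemma uniform_cell_entropy_le:
  assumes \<delta>: "0 < \<delta>" "\<delta> \<le> \<eta>" and U: "uniform_quantizer lo hi \<delta> = (n, a, c)" and i: "i \<in> {1..n}"
  defines "p \<equiv> integral {a (i - 1)..a i} f" and "e \<equiv> integral {a (i - 1)..a i} (\<lambda>x. f x * ln (f x))"
  shows "- (p * ln p) \<le> - e - p * ln \<delta> + p * ln ((1 + \<epsilon>) / (1 - \<epsilon>))
      + 2 * \<epsilon> / exp 1 * (a i - a (i - 1)) + (if i = n then M * \<delta> / exp 1 else 0)"
proof -
  note cell = uniform_cell[OF \<delta>(1) U i, folded p_def]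
  have nonneg_cell: "\<And>x. x \<in> {a (i - 1)..a i} \<Longrightarrow> 0 \<le> f x" by (simp add: nonneg)
  have extra: "0 \<le> p * ln ((1 + \<epsilon>) / (1 - \<epsilon>))" "0 \<le> 2 * \<epsilon> / exp 1 * (a i - a (i - 1))"
    using cell ratio_ge_1 eps by simp_all
  show ?thesis
  proof (cases rule: uniform_cell_cases[OF \<delta> U i, case_names last flat small])
    case last
    have "f x \<le> M" if "x \<in> {a (i - 1)..a i}" for x using bounded that cell(2) by auto
    from cell_entropy_le_bounded[OF cell(4) nonneg_cell this _ \<delta>(1), folded p_def e_def] M_ge_1 cell(5)
    show ?thesis using last extra by simp
  next
    case (flat m)
    from cell_entropy_le_nearly_constant[OF cell(1,4) flat(3) ratio_ge_1 flat(4), folded p_def e_def]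
    show ?thesis using flat(1,2) extra(2) by simp
  next
    case small
    from cell_entropy_le_bounded[OF cell(4) nonneg_cell small(3) _ \<delta>(1), folded p_def e_def] eps cell(5)
    have "- (p * ln p) \<le> - e - p * ln \<delta> + 2 * \<epsilon> / exp 1 * (a i - a (i - 1))"
      using small(2) by simp
    then show ?thesis unfolding if_not_P[OF small(1)] using extra(1) by linarith
  qed
qed

lemma uniform_cell_moment_le:
  assumes \<delta>: "0 < \<delta>" "\<delta> \<le> \<eta>" and U: "uniform_quantizer lo hi \<delta> = (n, a, c)" and i: "i \<in> {1..n}"
  defines "p \<equiv> integral {a (i - 1)..a i} f"
  shows "integral {a (i - 1)..a i} (\<lambda>x. (x - c i)^2 * f x) \<le> (1 + \<epsilon>) / (1 - \<epsilon>) * p * \<delta>^2 / 12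
      + 2 * \<epsilon> * \<delta>^2 / 12 * (a i - a (i - 1)) + (if i = n then M * \<delta>^3 / 12 else 0)"
proof -
  note cell = uniform_cell[OF \<delta>(1) U i, folded p_def]
  have nonneg_cell: "\<And>x. x \<in> {a (i - 1)..a i} \<Longrightarrow> 0 \<le> f x" by (simp add: nonneg)
  have extra: "0 \<le> (1 + \<epsilon>) / (1 - \<epsilon>) * p * \<delta>^2 / 12" "0 \<le> 2 * \<epsilon> * \<delta>^2 / 12 * (a i - a (i - 1))"
    using cell ratio_ge_1 eps by simp_all
  have mid: "c i = (a (i - 1) + a i) / 2" by (rule uniform_quantizer_props(4)[OF lohi \<delta>(1) U])
  show ?thesis
  proof (cases rule: uniform_cell_cases[OF \<delta> U i, case_names last flat small])
    case last
    have "f x \<le> M" if "x \<in> {a (i - 1)..a i}" for x using bounded that cell(2) by auto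
    from midpoint_moment_le[OF less_imp_le[OF cell(1)] cell(4) nonneg_cell this] have "integral {a (i - 1)..a i} (\<lambda>x. (x - (a (i - 1) + a i) / 2)^2 * f x)
        \<le> M * (a i - a (i - 1))^3 / 12" .
    also have "\<dots> \<le> M * \<delta>^3 / 12" using cell(1,3) M_ge_1 by (simp add: power_mono)
    finally show ?thesis unfolding mid using last extra by simp
  next
    case (flat m)
    from midpoint_moment_le_nearly_constant[OF cell(1,4) flat(3) ratio_ge_1 flat(4), folded p_def]
    show ?thesis unfolding mid using flat(1,2) extra(2) by simp
  next
    case small
    from midpoint_moment_le[OF less_imp_le[OF cell(1)] cell(4) nonneg_cell small(3)] show ?thesis
      unfolding mid using small(1,2) extra(1) by (simp add: power3_eq_cube power2_eq_square mult_ac)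
  qed
qed

lemma uniform_entropy_le:
  assumes \<delta>: "0 < \<delta>" "\<delta> \<le> \<eta>"
  shows "quant_entropy f (uniform_quantizer lo hi \<delta>) \<le> diff_entropy - ln \<delta> + ln ((1 + \<epsilon>) / (1 - \<epsilon>))
      + 2 * \<epsilon> / exp 1 * (hi - lo) + M * \<delta> / exp 1"
proof -
  obtain n a c where U: "uniform_quantizer lo hi \<delta> = (n, a, c)" by (metis prod_cases3)
  have Q: "is_quantizer lo hi (n, a, c)" by (rule uniform_quantizer_props(1)[OF lohi \<delta>(1) U])
  define p where "p i = integral {a (i - 1)..a i} f" for i
  define e where "e i = integral {a (i - 1)..a i} (\<lambda>x. f x * ln (f x))" for i
  define len where "len i = a i - a (i - 1)" for i
  have n: "n \<in> {1..n}" using Q by (simp add: is_quantizer_def)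
  have "quant_entropy f (n, a, c) = (\<Sum>i=1..n. - (p i * ln (p i)))"
    by (simp add: quant_entropy_def p_def sum_negf)
  also have "\<dots> \<le> (\<Sum>i=1..n. - e i - p i * ln \<delta> + p i * ln ((1 + \<epsilon>) / (1 - \<epsilon>))
      + 2 * \<epsilon> / exp 1 * len i + (if i = n then M * \<delta> / exp 1 else 0))"
    using uniform_cell_entropy_le[OF \<delta> U] by (intro sum_mono) (simp add: p_def e_def len_def)
  also have "\<dots> = - (\<Sum>i=1..n. e i) - (\<Sum>i=1..n. p i) * ln \<delta> + (\<Sum>i=1..n. p i) * ln ((1 + \<epsilon>) / (1 - \<epsilon>))
      + 2 * \<epsilon> / exp 1 * (\<Sum>i=1..n. len i) + M * \<delta> / exp 1"
    using n by (simp add: sum.distrib sum_subtractf sum_negf sum_distrib_left sum_distrib_right)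
  finally show ?thesis
    using sum_cell_prob[OF Q] sum_cell_mult_ln[OF Q] sum_cell_lengths[OF Q] U
    by (simp add: p_def e_def len_def)
qed

lemma uniform_distortion_le:
  assumes \<delta>: "0 < \<delta>" "\<delta> \<le> \<eta>"
  shows "distortion f (uniform_quantizer lo hi \<delta>) \<le> \<delta>^2 / 12 * ((1 + \<epsilon>) / (1 - \<epsilon>) + 2 * \<epsilon> * (hi - lo) + M * \<delta>)"
proof -
  obtain n a c where U: "uniform_quantizer lo hi \<delta> = (n, a, c)" by (metis prod_cases3)
  have Q: "is_quantizer lo hi (n, a, c)" by (rule uniform_quantizer_props(1)[OF lohi \<delta>(1) U])
  define \<rho> where "\<rho> = (1 + \<epsilon>) / (1 - \<epsilon>)"
  define p where "p i = integral {a (i - 1)..a i} f" for i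
  define len where "len i = a i - a (i - 1)" for i
  have n: "n \<in> {1..n}" using Q by (simp add: is_quantizer_def)
  have "distortion f (n, a, c) \<le> (\<Sum>i=1..n. \<rho> * p i * \<delta>^2 / 12
      + 2 * \<epsilon> * \<delta>^2 / 12 * len i + (if i = n then M * \<delta>^3 / 12 else 0))"
    unfolding quantizer_simps
    using uniform_cell_moment_le[OF \<delta> U] by (intro sum_mono) (simp add: \<rho>_def p_def len_def)
  also have "\<dots> = \<rho> * (\<Sum>i=1..n. p i) * \<delta>^2 / 12 + 2 * \<epsilon> * \<delta>^2 / 12 * (\<Sum>i=1..n. len i) + M * \<delta>^3 / 12"
    using n by (simp add: sum.distrib sum_distrib_left sum_distrib_right sum_divide_distrib)
  also have "(\<Sum>i=1..n. p i) = 1" using sum_cell_prob[OF Q] by (simp add: p_def)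
  also have "(\<Sum>i=1..n. len i) = hi - lo" using sum_cell_lengths[OF Q] by (simp add: len_def)
  also have "\<rho> * 1 * \<delta>^2 / 12 + 2 * \<epsilon> * \<delta>^2 / 12 * (hi - lo) + M * \<delta>^3 / 12
      = \<delta>^2 / 12 * (\<rho> + 2 * \<epsilon> * (hi - lo) + M * \<delta>)"
    by (simp add: field_simps power3_eq_cube power2_eq_square)
  finally show ?thesis using U by (simp add: \<rho>_def)
qed

lemma uniform_distortion_div_le:
  assumes \<delta>: "0 < \<delta>" "\<delta> \<le> \<eta>" "\<delta> \<le> 1"
  shows "pi * (distortion f (uniform_quantizer lo hi \<delta>) / \<delta>) \<le> 3 * \<delta> + \<delta> * (hi - lo) + M * \<delta>"
proof -
  define L where "L = hi - lo"
  have "2 * \<epsilon> * L \<le> L" using mult_left_le_one_le[of L "2 * \<epsilon>"] eps lohi by (simp add: L_def)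
  moreover have "M * \<delta> \<le> M" using mult_left_le[of \<delta> M] \<delta> M_ge_1 by simp
  ultimately have B: "(1 + \<epsilon>) / (1 - \<epsilon>) + 2 * \<epsilon> * L + M * \<delta> \<le> 3 + L + M"
    using ratio_minus_1_le eps by linarith
  have "distortion f (uniform_quantizer lo hi \<delta>) / \<delta> \<le> \<delta> / 12 * ((1 + \<epsilon>) / (1 - \<epsilon>) + 2 * \<epsilon> * L + M * \<delta>)"
    using uniform_distortion_le[OF \<delta>(1,2)] \<delta> by (simp add: L_def divide_le_eq power2_eq_square mult_ac)
  also have "\<dots> \<le> \<delta> / 12 * (3 + L + M)" using B \<delta> by (intro mult_left_mono) auto
  finally have "pi * (distortion f (uniform_quantizer lo hi \<delta>) / \<delta>) \<le> pi / 12 * (\<delta> * (3 + L + M))"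
    using mult_left_mono[of _ _ pi] by fastforce
  also have "\<dots> \<le> \<delta> * (3 + L + M)"
    using mult_left_le_one_le[of "\<delta> * (3 + L + M)" "pi / 12"] pi_less_4 \<delta> lohi M_ge_1 by (simp add: L_def)
  finally show ?thesis by (simp add: L_def algebra_simps)
qed

lemma entropy_gap_le_raw:
  assumes Q: "is_quantizer lo hi Q" and DQ: "distortion f Q \<le> distortion f (uniform_quantizer lo hi \<delta>)"
    and \<delta>: "0 < \<delta>" "\<delta> \<le> \<eta>" and r: "0 < r"
  defines "\<rho> \<equiv> (1 + \<epsilon>) / (1 - \<epsilon>)" and "D \<equiv> distortion f (uniform_quantizer lo hi \<delta>)"
  shows "quant_entropy f (uniform_quantizer lo hi \<delta>) - quant_entropy f Q
    \<le> 3/2 * ln \<rho> + 2 * \<epsilon> / exp 1 * (hi - lo) + M * \<delta> / exp 1 + ln (\<rho> + 2 * \<epsilon> * (hi - lo) + M * \<delta>) / 2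
      + pi * (D / r^2 + (pi * M * r / \<eta> + 2 * \<epsilon>) * (hi - lo))"
proof -
  define B where "B = \<rho> + 2 * \<epsilon> * (hi - lo) + M * \<delta>"
  have \<rho>: "1 \<le> \<rho>" using ratio_ge_1 by (simp add: \<rho>_def)
  have B: "0 < B" using \<rho> eps M_ge_1 \<delta> lohi by (simp add: B_def add_pos_nonneg)
  have D: "D \<le> \<delta>^2 / 12 * B" using uniform_distortion_le[OF \<delta>] by (simp add: D_def B_def \<rho>_def)
  have "ln (12 * \<rho> * distortion f Q) \<le> ln (12 * \<rho> * (\<delta>^2 / 12 * B))"
    using distortion_pos[OF Q] DQ D \<rho> by (subst ln_le_cancel_iff) (auto simp: D_def)
  also have "\<dots> = ln \<rho> + 2 * ln \<delta> + ln B" using \<rho> \<delta> B by (simp add: ln_mult ln_realpow)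
  finally have ln_DQ: "ln (12 * \<rho> * distortion f Q) \<le> ln \<rho> + 2 * ln \<delta> + ln B" .
  have "pi * (distortion f Q / r^2 + (pi * M * r / \<eta> + 2 * \<epsilon>) * (hi - lo))
      \<le> pi * (D / r^2 + (pi * M * r / \<eta> + 2 * \<epsilon>) * (hi - lo))"
    using DQ r by (simp add: D_def divide_right_mono)
  with quant_entropy_ge[OF Q r, folded \<rho>_def] ln_DQ
  have "diff_entropy - ln \<rho> / 2 - ln \<delta> - ln B / 2
      - pi * (D / r^2 + (pi * M * r / \<eta> + 2 * \<epsilon>) * (hi - lo)) \<le> quant_entropy f Q"
    by linarith
  then show ?thesis using uniform_entropy_le[OF \<delta>] by (simp add: \<rho>_def B_def)
qed

lemma entropy_gap_le:
  assumes Q: "is_quantizer lo hi Q" and DQ: "distortion f Q \<le> distortion f (uniform_quantizer lo hi \<delta>)"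
    and \<delta>: "0 < \<delta>" "\<delta> \<le> \<eta>" "\<delta> \<le> 1"
  shows "quant_entropy f (uniform_quantizer lo hi \<delta>) - quant_entropy f Q
    \<le> \<epsilon> * (8 + 10 * (hi - lo)) + \<delta> * (3 + (hi - lo) + 2 * M) + pi^2 * M * (hi - lo) * sqrt \<delta> / \<eta>"
proof -
  define \<rho> where "\<rho> = (1 + \<epsilon>) / (1 - \<epsilon>)"
  define L where "L = hi - lo"
  define D where "D = distortion f (uniform_quantizer lo hi \<delta>)"
  have L: "0 < L" using lohi by (simp add: L_def)
  have \<rho>: "\<rho> - 1 \<le> 4 * \<epsilon>" "1 \<le> \<rho>" using ratio_minus_1_le ratio_ge_1 by (simp_all add: \<rho>_def)
  have ln_\<rho>: "ln \<rho> \<le> 4 * \<epsilon>" using ln_le_minus_one[of \<rho>] \<rho> by simp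
  have ln_B: "ln (\<rho> + 2 * \<epsilon> * L + M * \<delta>) \<le> 4 * \<epsilon> + 2 * \<epsilon> * L + M * \<delta>"
  proof -
    have "0 < \<rho> + 2 * \<epsilon> * L + M * \<delta>" using \<rho> eps L M_ge_1 \<delta>(1) by (simp add: add_pos_nonneg)
    then show ?thesis using ln_le_minus_one \<rho> by fastforce
  qed
  have "2 * \<epsilon> / exp 1 * L \<le> \<epsilon> * L" "M * \<delta> / exp 1 \<le> M * \<delta> / 2"
    using eps L M_ge_1 \<delta> exp_ge_add_one_self[of 1] by (simp_all add: divide_le_eq frac_le)
  moreover have "pi * (2 * \<epsilon> * L) \<le> 8 * \<epsilon> * L" using pi_less_4 eps L by simp
  moreover have "pi * (D / \<delta> + (pi * M * sqrt \<delta> / \<eta> + 2 * \<epsilon>) * L)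
      = pi * (D / \<delta>) + pi^2 * M * L * sqrt \<delta> / \<eta> + pi * (2 * \<epsilon> * L)"
    by (simp add: algebra_simps power2_eq_square)
  moreover note entropy_gap_le_raw[OF Q DQ \<delta>(1,2) real_sqrt_gt_zero[OF \<delta>(1)], folded \<rho>_def L_def D_def,
      unfolded real_sqrt_pow2[OF less_imp_le[OF \<delta>(1)]]]
  moreover note uniform_distortion_div_le[OF \<delta>, folded L_def D_def]
  ultimately have "quant_entropy f (uniform_quantizer lo hi \<delta>) - quant_entropy f Q
      \<le> 8 * \<epsilon> + 10 * (\<epsilon> * L) + 3 * \<delta> + \<delta> * L + 2 * (M * \<delta>) + pi^2 * M * L * sqrt \<delta> / \<eta>"
    using ln_\<rho> ln_B by linarith
  then show ?thesis by (simp add: L_def algebra_simps)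
qed

lemma aoi_gap_bound:
  assumes \<delta>: "0 < \<delta>" "\<delta> \<le> \<eta>" "\<delta> \<le> 1" "M * \<delta> < 1"
  shows "0 \<le> aoi_gap \<delta>"
    and "aoi_gap \<delta> \<le> 3/2 * (\<epsilon> * (8 + 10 * (hi - lo)) / ln 2)
      + (3/2 * ((\<delta> * (3 + (hi - lo) + 2 * M) + pi^2 * M * (hi - lo) * sqrt \<delta> / \<eta>) / ln 2)
         + (hi - lo + 1) * (4 + M^3) / (2 * ln 2 * - ln (M * \<delta>)))"
proof -
  define U where "U = uniform_quantizer lo hi \<delta>"
  have "cell_prob f U i < 1" if "i \<in> {1..qcells U}" for i
    using uniform_cell_prob_le[OF \<delta>(1)] that \<delta>(4) unfolding U_def by fastforce
  note gap = aoi_gap_le[OF \<delta>(1) this[unfolded U_def] entropy_gap_le[OF _ _ \<delta>(1-3)], folded U_def]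
  show "0 \<le> aoi_gap \<delta>" by (rule gap(1))
  have H: "- ln (M * \<delta>) \<le> quant_entropy f U" using uniform_entropy_ge[OF \<delta>(1)] by (simp add: U_def)
  have ln_M\<delta>: "0 < - ln (M * \<delta>)" using \<delta> M_ge_1 by simp
  have "quant_varentropy f U \<le> (hi - lo + 1) * (4 + M^3)"
    using uniform_varentropy_le[OF \<delta>(1)] \<delta>(3) M_ge_1 by (simp add: U_def) (smt (verit) mult_right_mono zero_le_power)
  then have "quant_varentropy f U / (2 * ln 2 * quant_entropy f U)
      \<le> (hi - lo + 1) * (4 + M^3) / (2 * ln 2 * quant_entropy f U)"
    using H ln_M\<delta> by (intro divide_right_mono) auto
  also have "\<dots> \<le> (hi - lo + 1) * (4 + M^3) / (2 * ln 2 * - ln (M * \<delta>))"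
  proof (rule divide_left_mono)
    have "0 < quant_entropy f U" using H ln_M\<delta> by linarith
    then show "0 < 2 * ln 2 * quant_entropy f U * (2 * ln 2 * - ln (M * \<delta>))"
      using ln_M\<delta> by (intro mult_pos_pos) auto
    show "2 * ln 2 * - ln (M * \<delta>) \<le> 2 * ln 2 * quant_entropy f U" by (rule mult_left_mono[OF H]) simp
    show "0 \<le> (hi - lo + 1) * (4 + M^3)" using lohi M_ge_1 by simp
  qed
  moreover have "3/2 * ((\<epsilon> * (8 + 10 * (hi - lo)) + \<delta> * (3 + (hi - lo) + 2 * M)
        + pi^2 * M * (hi - lo) * sqrt \<delta> / \<eta>) / ln 2)
      = 3/2 * (\<epsilon> * (8 + 10 * (hi - lo)) / ln 2)
        + 3/2 * ((\<delta> * (3 + (hi - lo) + 2 * M) + pi^2 * M * (hi - lo) * sqrt \<delta> / \<eta>) / ln 2)"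
    by (simp add: add_divide_distrib distrib_left)
  ultimately show "aoi_gap \<delta> \<le> 3/2 * (\<epsilon> * (8 + 10 * (hi - lo)) / ln 2)
      + (3/2 * ((\<delta> * (3 + (hi - lo) + 2 * M) + pi^2 * M * (hi - lo) * sqrt \<delta> / \<eta>) / ln 2)
         + (hi - lo + 1) * (4 + M^3) / (2 * ln 2 * - ln (M * \<delta>)))"
    using gap(2) by linarith
qed

lemma eventually_aoi_gap_less:
  assumes e: "0 < e"
  shows "\<forall>\<^sub>F \<delta> in at_right 0. 0 \<le> aoi_gap \<delta> \<and> aoi_gap \<delta> < 3/2 * (\<epsilon> * (8 + 10 * (hi - lo)) / ln 2) + e"
proof -
  have "((\<lambda>\<delta>. 3/2 * ((\<delta> * (3 + (hi - lo) + 2 * M) + pi^2 * M * (hi - lo) * sqrt \<delta> / \<eta>) / ln 2)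
      + (hi - lo + 1) * (4 + M^3) / (2 * ln 2 * - ln (M * \<delta>))) \<longlongrightarrow> 0) (at_right 0)"
  proof (rule tendsto_add_zero)
    show "((\<lambda>\<delta>. 3/2 * ((\<delta> * (3 + (hi - lo) + 2 * M) + pi^2 * M * (hi - lo) * sqrt \<delta> / \<eta>) / ln 2))
        \<longlongrightarrow> 0) (at_right 0)"
      using eta by (auto intro!: tendsto_eq_intros)
    show "((\<lambda>\<delta>. (hi - lo + 1) * (4 + M^3) / (2 * ln 2 * - ln (M * \<delta>))) \<longlongrightarrow> 0) (at_right 0)"
      using M_ge_1 by real_asymp
  qed
  then have "\<forall>\<^sub>F \<delta> in at_right 0. 3/2 * ((\<delta> * (3 + (hi - lo) + 2 * M) + pi^2 * M * (hi - lo) * sqrt \<delta> / \<eta>) / ln 2)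
      + (hi - lo + 1) * (4 + M^3) / (2 * ln 2 * - ln (M * \<delta>)) < e"
    using e by (intro order_tendstoD) auto
  moreover have "\<forall>\<^sub>F \<delta> in at_right 0. 0 < \<delta> \<and> \<delta> \<le> \<eta> \<and> \<delta> \<le> 1 \<and> M * \<delta> < 1"
    unfolding eventually_at_right_field using eta M_ge_1
    by (intro exI[of _ "min (min \<eta> 1) (1 / M)"]) (auto simp: field_simps)
  ultimately show ?thesis
  proof eventually_elim
    case (elim \<delta>)
    then have \<delta>: "0 < \<delta>" "\<delta> \<le> \<eta>" "\<delta> \<le> 1" "M * \<delta> < 1" by auto
    show ?case using aoi_gap_bound[OF \<delta>] elim(1) by linarith
  qed
qed

end

section \<open>Asymptotic optimality of the uniform quantizer\<close>

context interval_density
begin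

lemma aoi_gap_tendsto_0: "((\<lambda>\<delta>. aoi_gap \<delta>) \<longlongrightarrow> 0) (at_right 0)"
proof -
  obtain M where M: "1 \<le> M" "\<And>x. x \<in> {lo..hi} \<Longrightarrow> f x \<le> M" using bounded_above by blast
  have "\<forall>\<^sub>F \<delta> in at_right 0. \<bar>aoi_gap \<delta>\<bar> < e" if e: "0 < e" for e
  proof -
    define C where "C = 8 + 10 * (hi - lo)"
    have C: "0 < C" using lohi by (simp add: C_def)
    define \<epsilon> where "\<epsilon> = min (1/2) (e * ln 2 / (3 * C))"
    have \<epsilon>: "0 < \<epsilon>" "\<epsilon> \<le> 1/2"
      unfolding \<epsilon>_def using e C by (simp_all only: min.cobounded1) simp
    have "\<epsilon> * C \<le> e * ln 2 / (3 * C) * C"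
      using C by (intro mult_right_mono) (auto simp: \<epsilon>_def)
    then have small: "3/2 * (\<epsilon> * C / ln 2) \<le> e / 2" using C by (simp add: field_simps)
    obtain \<eta> where "0 < \<eta>"
      and "\<And>x y. x \<in> {lo..hi} \<Longrightarrow> y \<in> {lo..hi} \<Longrightarrow> \<bar>x - y\<bar> \<le> \<eta> \<Longrightarrow> \<bar>f x - f y\<bar> \<le> \<epsilon>^2"
      using modulus_of_continuity[OF \<epsilon>(1)] by blast
    then interpret density_modulus f lo hi M \<epsilon> \<eta> using M \<epsilon> by unfold_locales
    have "0 < e / 2" using e by simp
    from eventually_aoi_gap_less[OF this] show ?thesis
      by eventually_elim (use small in \<open>simp add: C_def\<close>)
  qed
  then show ?thesis by (simp add: tendsto_iff dist_real_def)
qed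

end

theorem theorem3:
  fixes f :: "real \<Rightarrow> real" and lo hi :: real
  assumes lohi: "lo < hi"
    and nonneg: "\<And>x. f x \<ge> 0"
    and pdf: "(f has_integral 1) UNIV"
    and supp_out: "\<And>x. x \<notin> {lo..hi} \<Longrightarrow> f x = 0"
    and supp: "closure {x. f x \<noteq> 0} = {lo..hi}"
    and cont: "continuous_on {lo..hi} f"
    and diff: "\<And>x. x \<in> {lo..hi} \<Longrightarrow> f differentiable (at x within {lo..hi})"
    and condB1: "set_integrable lborel {lo..hi} (\<lambda>x. f x * (log 2 (f x))^2)"
    and condB2: "set_integrable lborel {lo..hi} (\<lambda>x. f x * log 2 (f x))"
  shows "((\<lambda>\<delta>. aoi_opt f (uniform_quantizer lo hi \<delta>)
            - Inf {aoi_opt f Q | Q. is_quantizer lo hi Q \<and>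
                     distortion f Q \<le> distortion f (uniform_quantizer lo hi \<delta>)})
          \<longlongrightarrow> 0) (at_right 0)"
proof -
  have "(\<lambda>x. if x \<in> {lo..hi} then f x else 0) = f" using supp_out by auto
  then have "(f has_integral 1) {lo..hi}" using pdf has_integral_restrict_UNIV[of "{lo..hi}" f 1] by simp
  then have total: "integral {lo..hi} f = 1" by (rule integral_unique)
  interpret interval_density f lo hi by unfold_locales (simp_all add: lohi nonneg supp cont total)
  show ?thesis using aoi_gap_tendsto_0 by (simp add: aoi_gap_def)
qed

end
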